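(* For every $\ell\in\mathbb{N}^+$ there is a dynamic flow network with infinite considered time, of size polynomial in $\ell$, acyclic, with only two capacity changes, such that every minimum dynamic cut and every maximum dynamic flow has complexity at least $2^\ell$ (exponential complexity); this also holds with discrete time.
   Context: A dynamic flow network: directed graph $G=(V,E)$, source $s$, target $t$, constant transit times $\tau_e\ge0$, piecewise constant capacity functions $u_e$ with finitely many changes in total; a capacity change is a jump of the capacity function of one edge at one time. With infinite considered time, time ranges over $\mathbb{R}$; a flow (resp. cut) is maximum (resp. minimum) with infinite considered time if it is constant outside some finite interval $I$ and optimal on $I$ in the sense that for every interval $J\supset I$ there is an interval $K\supset J$ such that some maximum flow (resp. minimum cut) for the considered time interval $K$ coincides with it on $J$. A dynamic flow is a family of measurable functions $f_e$ with $f_e\le u_e$ and strong flow conservation at all $v\ne s,t$ at all times (with transit time delay $\tau_e$ along $e$). A dynamic cut assigns each vertex $v$ a function $S_v$ into $\{0,1\}$ with $S_s\equiv1$, $S_t\equiv0$; its capacity is the integral over time of $\sum_{e=(v,w):S_v(\Theta)=1,S_w(\Theta+\tau_e)=0}u_e(\Theta)$. The complexity of a cut is the total number of times vertices switch value of $S_v$; the complexity of a flow is the total number of changes of the functions $f_e$. *)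

theory Defs
  imports "HOL-Analysis.Analysis" "HOL-Library.Extended_Nat"
begin

definition changes :: "(real \<Rightarrow> 'a) \<Rightarrow> real set" where
  "changes g = {\<theta>. \<not> (\<exists>\<delta>>0. \<forall>x. \<bar>x - \<theta>\<bar> < \<delta> \<longrightarrow> g x = g \<theta>)}"

definition nchanges :: "(real \<Rightarrow> 'a) \<Rightarrow> enat" where
  "nchanges g = (if finite (changes g) then enat (card (changes g)) else \<infinity>)"

definition changes_d :: "(int \<Rightarrow> 'a) \<Rightarrow> int set" where
  "changes_d g = {\<theta>. g (\<theta> + 1) \<noteq> g \<theta>}"

definition nchanges_d :: "(int \<Rightarrow> 'a) \<Rightarrow> enat" where
  "nchanges_d g = (if finite (changes_d g) then enat (card (changes_d g)) else \<infinity>)"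

text \<open>Vertices are natural numbers, edges are pairs of vertices.
  \<open>\<tau>\<close> are the transit times, \<open>u\<close> the capacity functions.\<close>

definition acyclic_graph :: "(nat \<times> nat) set \<Rightarrow> bool" where
  "acyclic_graph E \<longleftrightarrow> (\<forall>v. (v, v) \<notin> E\<^sup>+)"

definition dyn_network ::
  "nat set \<Rightarrow> (nat \<times> nat) set \<Rightarrow> nat \<Rightarrow> nat \<Rightarrow> (nat \<times> nat \<Rightarrow> real) \<Rightarrow> (nat \<times> nat \<Rightarrow> real \<Rightarrow> real) \<Rightarrow> bool"
  where
  "dyn_network V E s t \<tau> u \<longleftrightarrow>
     finite V \<and> E \<subseteq> V \<times> V \<and> s \<in> V \<and> t \<in> V \<and> s \<noteq> t \<and>
     (\<forall>e\<in>E. \<tau> e \<ge> 0) \<and> (\<forall>e\<in>E. \<forall>\<theta>. u e \<theta> \<ge> 0) \<and>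
     (\<forall>e\<in>E. finite (changes (u e)))"

definition num_cap_changes :: "(nat \<times> nat) set \<Rightarrow> (nat \<times> nat \<Rightarrow> real \<Rightarrow> real) \<Rightarrow> enat" where
  "num_cap_changes E u = (\<Sum>e\<in>E. nchanges (u e))"

text \<open>Size bound: at most \<open>P\<close> vertices and edges, all numerical data (transit times,
  capacity values, times of capacity changes) are integers of absolute value at
  most \<open>2^P\<close>, i.e. of encoding length \<open>O(P)\<close>.\<close>
definition dyn_size_le ::
  "nat set \<Rightarrow> (nat \<times> nat) set \<Rightarrow> (nat \<times> nat \<Rightarrow> real) \<Rightarrow> (nat \<times> nat \<Rightarrow> real \<Rightarrow> real) \<Rightarrow> nat \<Rightarrow> bool"
  where
  "dyn_size_le V E \<tau> u P \<longleftrightarrow>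
     card V \<le> P \<and> card E \<le> P \<and>
     (\<forall>e\<in>E. \<tau> e \<in> \<int> \<and> \<bar>\<tau> e\<bar> \<le> 2 ^ P) \<and>
     (\<forall>e\<in>E. \<forall>\<theta>. u e \<theta> \<in> \<int> \<and> \<bar>u e \<theta>\<bar> \<le> 2 ^ P) \<and>
     (\<forall>e\<in>E. \<forall>\<theta>\<in>changes (u e). \<theta> \<in> \<int> \<and> \<bar>\<theta>\<bar> \<le> 2 ^ P)"

text \<open>Flow entering edge \<open>e\<close> at time \<open>\<theta>\<close> arrives at time \<open>\<theta> + \<tau> e\<close>; both must lie in
  the considered time interval.\<close>
definition is_flow ::
  "nat set \<Rightarrow> (nat \<times> nat) set \<Rightarrow> nat \<Rightarrow> nat \<Rightarrow> (nat \<times> nat \<Rightarrow> real) \<Rightarrow> (nat \<times> nat \<Rightarrow> real \<Rightarrow> real)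
   \<Rightarrow> real \<Rightarrow> real \<Rightarrow> (nat \<times> nat \<Rightarrow> real \<Rightarrow> real) \<Rightarrow> bool"
  where
  "is_flow V E s t \<tau> u a b f \<longleftrightarrow>
     (\<forall>e\<in>E. f e \<in> borel_measurable borel) \<and>
     (\<forall>e\<in>E. \<forall>\<theta>. 0 \<le> f e \<theta> \<and> f e \<theta> \<le> u e \<theta>) \<and>
     (\<forall>e\<in>E. \<forall>\<theta>. \<not> (a \<le> \<theta> \<and> \<theta> + \<tau> e \<le> b) \<longrightarrow> f e \<theta> = 0) \<and>
     (\<forall>v\<in>V - {s, t}. \<forall>\<theta>.
        (\<Sum>e\<in>{e\<in>E. snd e = v}. f e (\<theta> - \<tau> e)) = (\<Sum>e\<in>{e\<in>E. fst e = v}. f e \<theta>))"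

definition flow_value ::
  "(nat \<times> nat) set \<Rightarrow> nat \<Rightarrow> (nat \<times> nat \<Rightarrow> real) \<Rightarrow> (nat \<times> nat \<Rightarrow> real \<Rightarrow> real) \<Rightarrow> real"
  where
  "flow_value E s \<tau> f =
     (LINT \<theta>|lborel. (\<Sum>e\<in>{e\<in>E. fst e = s}. f e \<theta>) - (\<Sum>e\<in>{e\<in>E. snd e = s}. f e (\<theta> - \<tau> e)))"

definition is_max_flow ::
  "nat set \<Rightarrow> (nat \<times> nat) set \<Rightarrow> nat \<Rightarrow> nat \<Rightarrow> (nat \<times> nat \<Rightarrow> real) \<Rightarrow> (nat \<times> nat \<Rightarrow> real \<Rightarrow> real)
   \<Rightarrow> real \<Rightarrow> real \<Rightarrow> (nat \<times> nat \<Rightarrow> real \<Rightarrow> real) \<Rightarrow> bool"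
  where
  "is_max_flow V E s t \<tau> u a b f \<longleftrightarrow>
     is_flow V E s t \<tau> u a b f \<and>
     (\<forall>g. is_flow V E s t \<tau> u a b g \<longrightarrow> flow_value E s \<tau> g \<le> flow_value E s \<tau> f)"

definition is_cut ::
  "nat set \<Rightarrow> nat \<Rightarrow> nat \<Rightarrow> real \<Rightarrow> real \<Rightarrow> (nat \<Rightarrow> real \<Rightarrow> bool) \<Rightarrow> bool"
  where
  "is_cut V s t a b S \<longleftrightarrow>
     (\<forall>v\<in>V. {\<theta>. S v \<theta>} \<in> sets borel) \<and>
     (\<forall>\<theta>\<in>{a..b}. S s \<theta> \<and> \<not> S t \<theta>)"

definition cut_capacity ::
  "(nat \<times> nat) set \<Rightarrow> (nat \<times> nat \<Rightarrow> real) \<Rightarrow> (nat \<times> nat \<Rightarrow> real \<Rightarrow> real) \<Rightarrow> real \<Rightarrow> real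
   \<Rightarrow> (nat \<Rightarrow> real \<Rightarrow> bool) \<Rightarrow> real"
  where
  "cut_capacity E \<tau> u a b S =
     (\<Sum>e\<in>E. LINT \<theta>:{a..b - \<tau> e}|lborel.
        (if S (fst e) \<theta> \<and> \<not> S (snd e) (\<theta> + \<tau> e) then u e \<theta> else 0))"

definition is_min_cut ::
  "nat set \<Rightarrow> (nat \<times> nat) set \<Rightarrow> nat \<Rightarrow> nat \<Rightarrow> (nat \<times> nat \<Rightarrow> real) \<Rightarrow> (nat \<times> nat \<Rightarrow> real \<Rightarrow> real)
   \<Rightarrow> real \<Rightarrow> real \<Rightarrow> (nat \<Rightarrow> real \<Rightarrow> bool) \<Rightarrow> bool"
  where
  "is_min_cut V E s t \<tau> u a b S \<longleftrightarrow>
     is_cut V s t a b S \<and>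
     (\<forall>S'. is_cut V s t a b S' \<longrightarrow> cut_capacity E \<tau> u a b S \<le> cut_capacity E \<tau> u a b S')"

definition is_flow_inf ::
  "nat set \<Rightarrow> (nat \<times> nat) set \<Rightarrow> nat \<Rightarrow> nat \<Rightarrow> (nat \<times> nat \<Rightarrow> real) \<Rightarrow> (nat \<times> nat \<Rightarrow> real \<Rightarrow> real)
   \<Rightarrow> (nat \<times> nat \<Rightarrow> real \<Rightarrow> real) \<Rightarrow> bool"
  where
  "is_flow_inf V E s t \<tau> u f \<longleftrightarrow>
     (\<forall>e\<in>E. f e \<in> borel_measurable borel) \<and>
     (\<forall>e\<in>E. \<forall>\<theta>. 0 \<le> f e \<theta> \<and> f e \<theta> \<le> u e \<theta>) \<and>
     (\<forall>v\<in>V - {s, t}. \<forall>\<theta>.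
        (\<Sum>e\<in>{e\<in>E. snd e = v}. f e (\<theta> - \<tau> e)) = (\<Sum>e\<in>{e\<in>E. fst e = v}. f e \<theta>))"

definition is_max_flow_inf ::
  "nat set \<Rightarrow> (nat \<times> nat) set \<Rightarrow> nat \<Rightarrow> nat \<Rightarrow> (nat \<times> nat \<Rightarrow> real) \<Rightarrow> (nat \<times> nat \<Rightarrow> real \<Rightarrow> real)
   \<Rightarrow> (nat \<times> nat \<Rightarrow> real \<Rightarrow> real) \<Rightarrow> bool"
  where
  "is_max_flow_inf V E s t \<tau> u f \<longleftrightarrow>
     is_flow_inf V E s t \<tau> u f \<and>
     (\<exists>a b. a \<le> b \<and>
        (\<forall>e\<in>E. \<exists>c. \<forall>\<theta>. \<theta> \<notin> {a..b} \<longrightarrow> f e \<theta> = c) \<and>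
        (\<forall>j1 j2. j1 \<le> a \<and> b \<le> j2 \<longrightarrow>
           (\<exists>k1 k2 g. k1 \<le> j1 \<and> j2 \<le> k2 \<and> is_max_flow V E s t \<tau> u k1 k2 g \<and>
              (\<forall>e\<in>E. \<forall>\<theta>\<in>{j1..j2}. g e \<theta> = f e \<theta>))))"

definition is_cut_inf :: "nat set \<Rightarrow> nat \<Rightarrow> nat \<Rightarrow> (nat \<Rightarrow> real \<Rightarrow> bool) \<Rightarrow> bool" where
  "is_cut_inf V s t S \<longleftrightarrow>
     (\<forall>v\<in>V. {\<theta>. S v \<theta>} \<in> sets borel) \<and> (\<forall>\<theta>. S s \<theta> \<and> \<not> S t \<theta>)"

definition is_min_cut_inf ::
  "nat set \<Rightarrow> (nat \<times> nat) set \<Rightarrow> nat \<Rightarrow> nat \<Rightarrow> (nat \<times> nat \<Rightarrow> real) \<Rightarrow> (nat \<times> nat \<Rightarrow> real \<Rightarrow> real)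
   \<Rightarrow> (nat \<Rightarrow> real \<Rightarrow> bool) \<Rightarrow> bool"
  where
  "is_min_cut_inf V E s t \<tau> u S \<longleftrightarrow>
     is_cut_inf V s t S \<and>
     (\<exists>a b. a \<le> b \<and>
        (\<forall>v\<in>V. \<exists>c. \<forall>\<theta>. \<theta> \<notin> {a..b} \<longrightarrow> S v \<theta> = c) \<and>
        (\<forall>j1 j2. j1 \<le> a \<and> b \<le> j2 \<longrightarrow>
           (\<exists>k1 k2 S'. k1 \<le> j1 \<and> j2 \<le> k2 \<and> is_min_cut V E s t \<tau> u k1 k2 S' \<and>
              (\<forall>v\<in>V. \<forall>\<theta>\<in>{j1..j2}. S' v \<theta> = S v \<theta>))))"

definition flow_complexity :: "(nat \<times> nat) set \<Rightarrow> (nat \<times> nat \<Rightarrow> real \<Rightarrow> real) \<Rightarrow> enat" where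
  "flow_complexity E f = (\<Sum>e\<in>E. nchanges (f e))"

definition cut_complexity :: "nat set \<Rightarrow> (nat \<Rightarrow> real \<Rightarrow> bool) \<Rightarrow> enat" where
  "cut_complexity V S = (\<Sum>v\<in>V. nchanges (S v))"

definition dyn_network_d ::
  "nat set \<Rightarrow> (nat \<times> nat) set \<Rightarrow> nat \<Rightarrow> nat \<Rightarrow> (nat \<times> nat \<Rightarrow> int) \<Rightarrow> (nat \<times> nat \<Rightarrow> int \<Rightarrow> real) \<Rightarrow> bool"
  where
  "dyn_network_d V E s t \<tau> u \<longleftrightarrow>
     finite V \<and> E \<subseteq> V \<times> V \<and> s \<in> V \<and> t \<in> V \<and> s \<noteq> t \<and>
     (\<forall>e\<in>E. \<tau> e \<ge> 0) \<and> (\<forall>e\<in>E. \<forall>\<theta>. u e \<theta> \<ge> 0) \<and>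
     (\<forall>e\<in>E. finite (changes_d (u e)))"

definition num_cap_changes_d :: "(nat \<times> nat) set \<Rightarrow> (nat \<times> nat \<Rightarrow> int \<Rightarrow> real) \<Rightarrow> enat" where
  "num_cap_changes_d E u = (\<Sum>e\<in>E. nchanges_d (u e))"

definition dyn_size_le_d ::
  "nat set \<Rightarrow> (nat \<times> nat) set \<Rightarrow> (nat \<times> nat \<Rightarrow> int) \<Rightarrow> (nat \<times> nat \<Rightarrow> int \<Rightarrow> real) \<Rightarrow> nat \<Rightarrow> bool"
  where
  "dyn_size_le_d V E \<tau> u P \<longleftrightarrow>
     card V \<le> P \<and> card E \<le> P \<and>
     (\<forall>e\<in>E. \<bar>\<tau> e\<bar> \<le> 2 ^ P) \<and>
     (\<forall>e\<in>E. \<forall>\<theta>. u e \<theta> \<in> \<int> \<and> \<bar>u e \<theta>\<bar> \<le> 2 ^ P) \<and>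
     (\<forall>e\<in>E. \<forall>\<theta>\<in>changes_d (u e). \<bar>\<theta>\<bar> \<le> 2 ^ P)"

definition is_flow_d ::
  "nat set \<Rightarrow> (nat \<times> nat) set \<Rightarrow> nat \<Rightarrow> nat \<Rightarrow> (nat \<times> nat \<Rightarrow> int) \<Rightarrow> (nat \<times> nat \<Rightarrow> int \<Rightarrow> real)
   \<Rightarrow> int \<Rightarrow> int \<Rightarrow> (nat \<times> nat \<Rightarrow> int \<Rightarrow> real) \<Rightarrow> bool"
  where
  "is_flow_d V E s t \<tau> u a b f \<longleftrightarrow>
     (\<forall>e\<in>E. \<forall>\<theta>. 0 \<le> f e \<theta> \<and> f e \<theta> \<le> u e \<theta>) \<and>
     (\<forall>e\<in>E. \<forall>\<theta>. \<not> (a \<le> \<theta> \<and> \<theta> + \<tau> e \<le> b) \<longrightarrow> f e \<theta> = 0) \<and>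
     (\<forall>v\<in>V - {s, t}. \<forall>\<theta>.
        (\<Sum>e\<in>{e\<in>E. snd e = v}. f e (\<theta> - \<tau> e)) = (\<Sum>e\<in>{e\<in>E. fst e = v}. f e \<theta>))"

definition flow_value_d ::
  "(nat \<times> nat) set \<Rightarrow> nat \<Rightarrow> (nat \<times> nat \<Rightarrow> int) \<Rightarrow> int \<Rightarrow> int \<Rightarrow> (nat \<times> nat \<Rightarrow> int \<Rightarrow> real) \<Rightarrow> real"
  where
  "flow_value_d E s \<tau> a b f =
     (\<Sum>\<theta>\<in>{a..b}. (\<Sum>e\<in>{e\<in>E. fst e = s}. f e \<theta>) - (\<Sum>e\<in>{e\<in>E. snd e = s}. f e (\<theta> - \<tau> e)))"

definition is_max_flow_d ::
  "nat set \<Rightarrow> (nat \<times> nat) set \<Rightarrow> nat \<Rightarrow> nat \<Rightarrow> (nat \<times> nat \<Rightarrow> int) \<Rightarrow> (nat \<times> nat \<Rightarrow> int \<Rightarrow> real)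
   \<Rightarrow> int \<Rightarrow> int \<Rightarrow> (nat \<times> nat \<Rightarrow> int \<Rightarrow> real) \<Rightarrow> bool"
  where
  "is_max_flow_d V E s t \<tau> u a b f \<longleftrightarrow>
     is_flow_d V E s t \<tau> u a b f \<and>
     (\<forall>g. is_flow_d V E s t \<tau> u a b g \<longrightarrow> flow_value_d E s \<tau> a b g \<le> flow_value_d E s \<tau> a b f)"

definition is_cut_d :: "nat \<Rightarrow> nat \<Rightarrow> int \<Rightarrow> int \<Rightarrow> (nat \<Rightarrow> int \<Rightarrow> bool) \<Rightarrow> bool" where
  "is_cut_d s t a b S \<longleftrightarrow> (\<forall>\<theta>\<in>{a..b}. S s \<theta> \<and> \<not> S t \<theta>)"

definition cut_capacity_d ::
  "(nat \<times> nat) set \<Rightarrow> (nat \<times> nat \<Rightarrow> int) \<Rightarrow> (nat \<times> nat \<Rightarrow> int \<Rightarrow> real) \<Rightarrow> int \<Rightarrow> int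
   \<Rightarrow> (nat \<Rightarrow> int \<Rightarrow> bool) \<Rightarrow> real"
  where
  "cut_capacity_d E \<tau> u a b S =
     (\<Sum>e\<in>E. \<Sum>\<theta>\<in>{a..b - \<tau> e}.
        (if S (fst e) \<theta> \<and> \<not> S (snd e) (\<theta> + \<tau> e) then u e \<theta> else 0))"

definition is_min_cut_d ::
  "(nat \<times> nat) set \<Rightarrow> nat \<Rightarrow> nat \<Rightarrow> (nat \<times> nat \<Rightarrow> int) \<Rightarrow> (nat \<times> nat \<Rightarrow> int \<Rightarrow> real)
   \<Rightarrow> int \<Rightarrow> int \<Rightarrow> (nat \<Rightarrow> int \<Rightarrow> bool) \<Rightarrow> bool"
  where
  "is_min_cut_d E s t \<tau> u a b S \<longleftrightarrow>
     is_cut_d s t a b S \<and>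
     (\<forall>S'. is_cut_d s t a b S' \<longrightarrow> cut_capacity_d E \<tau> u a b S \<le> cut_capacity_d E \<tau> u a b S')"

definition is_flow_inf_d ::
  "nat set \<Rightarrow> (nat \<times> nat) set \<Rightarrow> nat \<Rightarrow> nat \<Rightarrow> (nat \<times> nat \<Rightarrow> int) \<Rightarrow> (nat \<times> nat \<Rightarrow> int \<Rightarrow> real)
   \<Rightarrow> (nat \<times> nat \<Rightarrow> int \<Rightarrow> real) \<Rightarrow> bool"
  where
  "is_flow_inf_d V E s t \<tau> u f \<longleftrightarrow>
     (\<forall>e\<in>E. \<forall>\<theta>. 0 \<le> f e \<theta> \<and> f e \<theta> \<le> u e \<theta>) \<and>
     (\<forall>v\<in>V - {s, t}. \<forall>\<theta>.
        (\<Sum>e\<in>{e\<in>E. snd e = v}. f e (\<theta> - \<tau> e)) = (\<Sum>e\<in>{e\<in>E. fst e = v}. f e \<theta>))"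

definition is_max_flow_inf_d ::
  "nat set \<Rightarrow> (nat \<times> nat) set \<Rightarrow> nat \<Rightarrow> nat \<Rightarrow> (nat \<times> nat \<Rightarrow> int) \<Rightarrow> (nat \<times> nat \<Rightarrow> int \<Rightarrow> real)
   \<Rightarrow> (nat \<times> nat \<Rightarrow> int \<Rightarrow> real) \<Rightarrow> bool"
  where
  "is_max_flow_inf_d V E s t \<tau> u f \<longleftrightarrow>
     is_flow_inf_d V E s t \<tau> u f \<and>
     (\<exists>a b. a \<le> b \<and>
        (\<forall>e\<in>E. \<exists>c. \<forall>\<theta>. \<theta> \<notin> {a..b} \<longrightarrow> f e \<theta> = c) \<and>
        (\<forall>j1 j2. j1 \<le> a \<and> b \<le> j2 \<longrightarrow>
           (\<exists>k1 k2 g. k1 \<le> j1 \<and> j2 \<le> k2 \<and> is_max_flow_d V E s t \<tau> u k1 k2 g \<and>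
              (\<forall>e\<in>E. \<forall>\<theta>\<in>{j1..j2}. g e \<theta> = f e \<theta>))))"

definition is_min_cut_inf_d ::
  "nat set \<Rightarrow> (nat \<times> nat) set \<Rightarrow> nat \<Rightarrow> nat \<Rightarrow> (nat \<times> nat \<Rightarrow> int) \<Rightarrow> (nat \<times> nat \<Rightarrow> int \<Rightarrow> real)
   \<Rightarrow> (nat \<Rightarrow> int \<Rightarrow> bool) \<Rightarrow> bool"
  where
  "is_min_cut_inf_d V E s t \<tau> u S \<longleftrightarrow>
     (\<forall>\<theta>. S s \<theta> \<and> \<not> S t \<theta>) \<and>
     (\<exists>a b. a \<le> b \<and>
        (\<forall>v\<in>V. \<exists>c. \<forall>\<theta>. \<theta> \<notin> {a..b} \<longrightarrow> S v \<theta> = c) \<and>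
        (\<forall>j1 j2. j1 \<le> a \<and> b \<le> j2 \<longrightarrow>
           (\<exists>k1 k2 S'. k1 \<le> j1 \<and> j2 \<le> k2 \<and> is_min_cut_d E s t \<tau> u k1 k2 S' \<and>
              (\<forall>v\<in>V. \<forall>\<theta>\<in>{j1..j2}. S' v \<theta> = S v \<theta>))))"

definition flow_complexity_d :: "(nat \<times> nat) set \<Rightarrow> (nat \<times> nat \<Rightarrow> int \<Rightarrow> real) \<Rightarrow> enat" where
  "flow_complexity_d E f = (\<Sum>e\<in>E. nchanges_d (f e))"

definition cut_complexity_d :: "nat set \<Rightarrow> (nat \<Rightarrow> int \<Rightarrow> bool) \<Rightarrow> enat" where
  "cut_complexity_d V S = (\<Sum>v\<in>V. nchanges_d (S v))"

end

theory Submission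
  imports Defs
begin

text \<open>Let \<open>P\<^sub>i = \<Union>{[2m, 2m+1) | m < 2\<^sup>i}\<close> (\<open>pulse_train i\<close>). In the network, \<open>2\<^sup>l\<close> units of flow
  may leave the source during \<open>[0,1)\<close>, and stage \<open>i\<close> passes the flow at \<open>x\<^sub>i\<close> both directly to
  \<open>x\<^sub>i\<^sub>+\<^sub>1\<close> and through \<open>y\<^sub>i\<close> with delay \<open>2\<^sup>i\<^sup>+\<^sup>1\<close>; thus flow can reach \<open>x\<^sub>l\<close> only during \<open>P\<^sub>l\<close>, and
  the sink edge out of \<open>x\<^sub>l\<close> has capacity \<open>1\<close>. Hence the maximum flow value is \<open>2\<^sup>l\<close>, attained
  only if the sink edge is saturated on all of \<open>P\<^sub>l\<close> and empty in the gaps, which takes \<open>2\<^sup>l\<close>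
  changes. Dually, the cut following the pulse trains has capacity \<open>2\<^sup>l\<close>; sampling the cost of
  an arbitrary cut at the \<open>2\<^sup>l\<close> delayed copies of each instant of \<open>[0,1)\<close> shows that a cut of
  capacity \<open>2\<^sup>l\<close> contains \<open>x\<^sub>l\<close> on \<open>P\<^sub>l\<close> and not in the gaps, up to a null set, so \<open>x\<^sub>l\<close>
  switches \<open>2\<^sup>l\<close> times. Optima with infinite considered time agree with finite-window optima
  on arbitrarily large windows and inherit these patterns, in continuous and in discrete time.\<close>

section \<open>Pulse trains\<close>

definition pulse_starts :: "nat \<Rightarrow> 'a::linordered_idom set" where
  "pulse_starts i = (\<lambda>m. 2 * of_nat m) ` {..<2 ^ i}"

definition pulse_train :: "nat \<Rightarrow> 'a::linordered_idom \<Rightarrow> bool" where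
  "pulse_train i \<theta> \<longleftrightarrow> (\<exists>p\<in>pulse_starts i. p \<le> \<theta> \<and> \<theta> < p + 1)"

lemma finite_pulse_starts [simp]: "finite (pulse_starts i)"
  by (simp add: pulse_starts_def)

lemma card_pulse_starts [simp]: "card (pulse_starts i :: 'a::linordered_idom set) = 2 ^ i"
  unfolding pulse_starts_def by (subst card_image) (auto simp: inj_on_def)

lemma pulse_starts_0 [simp]: "pulse_starts 0 = {0}"
  by (auto simp: pulse_starts_def)

lemma pulse_starts_Suc:
  "pulse_starts (Suc i) = pulse_starts i \<union> (\<lambda>p. p + 2 ^ Suc i) ` pulse_starts i"
proof -
  have "{..<2 ^ Suc i} = {..<2 ^ i} \<union> (\<lambda>m. m + 2 ^ i) ` {..<2 ^ i :: nat}"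
  proof (intro equalityI subsetI)
    fix m :: nat assume "m \<in> {..<2 ^ Suc i}"
    then show "m \<in> {..<2 ^ i} \<union> (\<lambda>m. m + 2 ^ i) ` {..<2 ^ i}"
      by (cases "m < 2 ^ i") (auto simp: image_iff intro!: bexI[of _ "m - 2 ^ i"])
  qed auto
  then show ?thesis
    unfolding pulse_starts_def by (simp add: image_Un image_image algebra_simps)
qed

lemma pulse_starts_Ints: "p \<in> pulse_starts i \<Longrightarrow> p \<in> \<int>"
  by (auto simp: pulse_starts_def)

lemma pulse_starts_bounds:
  assumes "p \<in> pulse_starts i"
  shows "0 \<le> p" "p + 2 \<le> 2 ^ Suc i"
proof -
  obtain m where m: "m < 2 ^ i" "p = 2 * of_nat m"
    using assms by (auto simp: pulse_starts_def)
  then have "of_nat (m + 1) \<le> (of_nat (2 ^ i) :: 'a)"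
    by (simp only: of_nat_le_iff)
  then show "0 \<le> p" "p + 2 \<le> 2 ^ Suc i"
    using m(2) by simp_all
qed

lemma sum_pulse_starts_Suc:
  fixes f :: "'a::linordered_idom \<Rightarrow> 'b::comm_monoid_add"
  shows "(\<Sum>p\<in>pulse_starts (Suc i). f p) = (\<Sum>p\<in>pulse_starts i. f p) + (\<Sum>p\<in>pulse_starts i. f (p + 2 ^ Suc i))"
proof -
  have "pulse_starts i \<inter> (\<lambda>p. p + 2 ^ Suc i) ` pulse_starts i = ({} :: 'a set)"
    using pulse_starts_bounds[of _ i] by fastforce
  then show ?thesis
    unfolding pulse_starts_Suc by (simp add: sum.union_disjoint sum.reindex)
qed

lemma pulse_starts_induct:
  assumes "i \<le> l" "p \<in> pulse_starts i"
    and "P 0 0"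
    and "\<And>i p. i < l \<Longrightarrow> p \<in> pulse_starts i \<Longrightarrow> P i p \<Longrightarrow> P (Suc i) p \<and> P (Suc i) (p + 2 ^ Suc i)"
  shows "P i p"
  using assms(1,2)
proof (induction i arbitrary: p)
  case 0
  then show ?case using assms(3) by simp
next
  case (Suc i)
  then show ?case using assms(4)[of i] by (auto simp: pulse_starts_Suc)
qed

lemma pulse_train_0: "pulse_train 0 \<theta> \<longleftrightarrow> 0 \<le> \<theta> \<and> \<theta> < 1"
  by (simp add: pulse_train_def)

lemma pulse_train_Suc:
  "pulse_train (Suc i) \<theta> \<longleftrightarrow> pulse_train i \<theta> \<or> pulse_train i (\<theta> - 2 ^ Suc i)"
  unfolding pulse_train_def pulse_starts_Suc by (auto simp: algebra_simps)

lemma pulse_train_bounds: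
  assumes "pulse_train i \<theta>"
  shows "0 \<le> \<theta>" "\<theta> < 2 ^ Suc i"
  using assms pulse_starts_bounds[of _ i] unfolding pulse_train_def by force+

lemma pulse_train_disjoint: "\<not> (pulse_train i \<theta> \<and> pulse_train i (\<theta> - 2 ^ Suc i))"
  using pulse_train_bounds[of i \<theta>] pulse_train_bounds[of i "\<theta> - 2 ^ Suc i"] by auto

lemma pulse_train_at_start:
  assumes "0 \<le> \<theta>" "\<theta> < 1" "p \<in> pulse_starts i"
  shows "pulse_train i (\<theta> + p)"
  using assms unfolding pulse_train_def by (intro bexI[of _ p]) auto

lemma pulse_train_gap:
  assumes "0 \<le> \<theta>" "\<theta> < 1" "p \<in> pulse_starts j"
  shows "\<not> pulse_train i (\<theta> + p - 1)"
proof
  assume "pulse_train i (\<theta> + p - 1)"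
  then obtain m m' :: nat where "2 * of_nat m' \<le> \<theta> + 2 * of_nat m - 1" "\<theta> + 2 * of_nat m - 1 < 2 * of_nat m' + 1"
    using assms(3) by (auto simp: pulse_train_def pulse_starts_def)
  then have "2 * of_nat m' < (2 * of_nat m :: 'a)" "2 * of_nat m < (2 * of_nat m' + 2 :: 'a)"
    using assms(1,2) by linarith+
  then have "m' < m" "of_nat m < (of_nat (Suc m') :: 'a)"
    by simp_all
  then have "m' < m" "m < Suc m'"
    by (simp_all only: of_nat_less_iff)
  then show False by simp
qed

section \<open>Counting change points\<close>

lemma card_le_nchanges:
  assumes "finite P" "P \<subseteq> changes g"
  shows "enat (card P) \<le> nchanges g"
  using assms card_mono[of "changes g" P] by (auto simp: nchanges_def)

lemma card_le_nchanges_d: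
  fixes g :: "int \<Rightarrow> 'b"
  assumes "finite P" "\<And>p. p \<in> P \<Longrightarrow> g (p - 1) \<noteq> g p"
  shows "enat (card P) \<le> nchanges_d g"
proof (cases "finite (changes_d g)")
  case True
  have "(\<lambda>p. p - 1) ` P \<subseteq> changes_d g"
    using assms(2) by (auto simp: changes_d_def) (metis diff_add_cancel)
  then have "card ((\<lambda>p. p - 1) ` P) \<le> card (changes_d g)"
    using True by (rule card_mono[rotated])
  then show ?thesis
    using True by (simp add: nchanges_d_def card_image inj_on_def)
qed (simp add: nchanges_d_def)

lemma AE_lborel_obtain_between:
  fixes c d :: real
  assumes "AE x in lborel. P x" "c < d"
  obtains x where "c < x" "x < d" "P x"
proof -
  from assms(1) obtain N where N: "{x. \<not> P x} \<subseteq> N" "emeasure lborel N = 0" "N \<in> sets lborel"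
    by (auto elim: AE_E)
  have "\<not> {c<..<d} \<subseteq> N"
  proof
    assume "{c<..<d} \<subseteq> N"
    then have "emeasure lborel {c<..<d} \<le> emeasure lborel N"
      using N(3) by (rule emeasure_mono)
    then show False using N(2) assms(2) by simp
  qed
  then obtain x where "c < x" "x < d" "x \<notin> N"
    by (auto simp: subset_eq)
  then show thesis using N(1) that by auto
qed

lemma jump_in_changes:
  fixes g :: "real \<Rightarrow> 'b"
  assumes jump: "AE \<theta> in lborel. \<theta> \<in> {0..<1} \<longrightarrow> g (p + \<theta>) = A \<and> g (p + \<theta> - 1) = B"
    and "A \<noteq> B"
  shows "p \<in> changes g"
  unfolding changes_def
proof (clarify)
  fix \<delta> :: real
  assume "0 < \<delta>" and const: "\<forall>x. \<bar>x - p\<bar> < \<delta> \<longrightarrow> g x = g p"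
  define d where "d = min \<delta> 1"
  have d: "0 < d" "d \<le> 1" "d \<le> \<delta>"
    using \<open>0 < \<delta>\<close> by (auto simp: d_def)
  obtain \<theta>\<^sub>A where A: "0 < \<theta>\<^sub>A" "\<theta>\<^sub>A < d" "\<theta>\<^sub>A \<in> {0..<1} \<longrightarrow> g (p + \<theta>\<^sub>A) = A"
    using jump d(1) by (rule AE_lborel_obtain_between) auto
  obtain \<theta>\<^sub>B where B: "1 - d < \<theta>\<^sub>B" "\<theta>\<^sub>B < 1" "\<theta>\<^sub>B \<in> {0..<1} \<longrightarrow> g (p + \<theta>\<^sub>B - 1) = B"
    using jump by (rule AE_lborel_obtain_between[where c = "1 - d" and d = 1]) (use d in auto)
  have "g (p + \<theta>\<^sub>A) = g p" "g (p + \<theta>\<^sub>B - 1) = g p"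
    using A B d by (auto intro!: const[rule_format])
  then show False
    using A B d \<open>A \<noteq> B\<close> by auto
qed

section \<open>Restricting optima with infinite considered time\<close>

lemma max_flow_inf_restrict:
  assumes "is_max_flow_inf V E s t \<tau> u f"
  obtains k1 k2 g where "k1 \<le> c1" "c2 \<le> k2" "is_max_flow V E s t \<tau> u k1 k2 g"
    "\<forall>e\<in>E. \<forall>\<theta>\<in>{c1..c2}. g e \<theta> = f e \<theta>"
proof -
  obtain a b where "\<forall>j1 j2. j1 \<le> a \<and> b \<le> j2 \<longrightarrow>
      (\<exists>k1 k2 g. k1 \<le> j1 \<and> j2 \<le> k2 \<and> is_max_flow V E s t \<tau> u k1 k2 g \<and>
        (\<forall>e\<in>E. \<forall>\<theta>\<in>{j1..j2}. g e \<theta> = f e \<theta>))"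
    using assms unfolding is_max_flow_inf_def by blast
  from this[rule_format, of "min a c1" "max b c2"] show thesis
    by (force intro: that)
qed

lemma max_flow_inf_d_restrict:
  assumes "is_max_flow_inf_d V E s t \<tau> u f"
  obtains k1 k2 g where "k1 \<le> c1" "c2 \<le> k2" "is_max_flow_d V E s t \<tau> u k1 k2 g"
    "\<forall>e\<in>E. \<forall>\<theta>\<in>{c1..c2}. g e \<theta> = f e \<theta>"
proof -
  obtain a b where "\<forall>j1 j2. j1 \<le> a \<and> b \<le> j2 \<longrightarrow>
      (\<exists>k1 k2 g. k1 \<le> j1 \<and> j2 \<le> k2 \<and> is_max_flow_d V E s t \<tau> u k1 k2 g \<and>
        (\<forall>e\<in>E. \<forall>\<theta>\<in>{j1..j2}. g e \<theta> = f e \<theta>))"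
    using assms unfolding is_max_flow_inf_d_def by blast
  from this[rule_format, of "min a c1" "max b c2"] show thesis
    by (force intro: that)
qed

lemma min_cut_inf_restrict:
  assumes "is_min_cut_inf V E s t \<tau> u S"
  obtains k1 k2 S' where "k1 \<le> c1" "c2 \<le> k2" "is_min_cut V E s t \<tau> u k1 k2 S'"
    "\<forall>v\<in>V. \<forall>\<theta>\<in>{c1..c2}. S' v \<theta> = S v \<theta>"
proof -
  obtain a b where "\<forall>j1 j2. j1 \<le> a \<and> b \<le> j2 \<longrightarrow>
      (\<exists>k1 k2 S'. k1 \<le> j1 \<and> j2 \<le> k2 \<and> is_min_cut V E s t \<tau> u k1 k2 S' \<and>
        (\<forall>v\<in>V. \<forall>\<theta>\<in>{j1..j2}. S' v \<theta> = S v \<theta>))"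
    using assms unfolding is_min_cut_inf_def by blast
  from this[rule_format, of "min a c1" "max b c2"] show thesis
    by (force intro: that)
qed

lemma min_cut_inf_d_restrict:
  assumes "is_min_cut_inf_d V E s t \<tau> u S"
  obtains k1 k2 S' where "k1 \<le> c1" "c2 \<le> k2" "is_min_cut_d E s t \<tau> u k1 k2 S'"
    "\<forall>v\<in>V. \<forall>\<theta>\<in>{c1..c2}. S' v \<theta> = S v \<theta>"
proof -
  obtain a b where "\<forall>j1 j2. j1 \<le> a \<and> b \<le> j2 \<longrightarrow>
      (\<exists>k1 k2 S'. k1 \<le> j1 \<and> j2 \<le> k2 \<and> is_min_cut_d E s t \<tau> u k1 k2 S' \<and>
        (\<forall>v\<in>V. \<forall>\<theta>\<in>{j1..j2}. S' v \<theta> = S v \<theta>))"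
    using assms unfolding is_min_cut_inf_d_def by blast
  from this[rule_format, of "min a c1" "max b c2"] show thesis
    by (force intro: that)
qed

section \<open>Sampled cut costs\<close>

definition cut_edge_cost ::
  "(nat \<times> nat \<Rightarrow> 'a::plus) \<Rightarrow> (nat \<times> nat \<Rightarrow> 'a \<Rightarrow> real) \<Rightarrow> (nat \<Rightarrow> 'a \<Rightarrow> bool) \<Rightarrow> nat \<times> nat \<Rightarrow> 'a \<Rightarrow> real"
  where
  "cut_edge_cost \<tau> u S e \<theta> = (if S (fst e) \<theta> \<and> \<not> S (snd e) (\<theta> + \<tau> e) then u e \<theta> else 0)"

text \<open>A lower bound for the capacity of a cut that looks only at the times \<open>\<theta> + p\<close>, \<open>p \<in> D e\<close>, of
  each edge \<open>e\<close>: averaged over \<open>\<theta> \<in> [0,1)\<close> it is at most the capacity whenever the sample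
  times of each edge are \<open>1\<close>-separated and lie in the considered time interval.\<close>
definition sampled_cut_cost ::
  "(nat \<times> nat) set \<Rightarrow> (nat \<times> nat \<Rightarrow> 'a::plus) \<Rightarrow> (nat \<times> nat \<Rightarrow> 'a \<Rightarrow> real) \<Rightarrow> (nat \<Rightarrow> 'a \<Rightarrow> bool)
    \<Rightarrow> (nat \<times> nat \<Rightarrow> 'a set) \<Rightarrow> 'a \<Rightarrow> real"
  where
  "sampled_cut_cost E \<tau> u S D \<theta> = (\<Sum>e\<in>E. \<Sum>p\<in>D e. cut_edge_cost \<tau> u S e (\<theta> + p))"

lemma cut_capacity_eq_sum_cut_edge_cost:
  "cut_capacity E \<tau> u a b S = (\<Sum>e\<in>E. LINT \<theta>:{a..b - \<tau> e}|lborel. cut_edge_cost \<tau> u S e \<theta>)"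
  by (simp add: cut_capacity_def cut_edge_cost_def)

lemma cut_capacity_d_eq_sum_cut_edge_cost:
  "cut_capacity_d E \<tau> u a b S = (\<Sum>e\<in>E. \<Sum>\<theta>\<in>{a..b - \<tau> e}. cut_edge_cost \<tau> u S e \<theta>)"
  by (simp add: cut_capacity_d_def cut_edge_cost_def)

lemma cut_edge_cost_nonneg: "(\<And>\<theta>. 0 \<le> u e \<theta>) \<Longrightarrow> 0 \<le> cut_edge_cost \<tau> u S e \<theta>"
  by (simp add: cut_edge_cost_def)

lemma sampled_cut_cost_le_cut_capacity_d:
  assumes "\<And>e. e \<in> E \<Longrightarrow> D e \<subseteq> {a..b - \<tau> e}" "\<And>e \<theta>. e \<in> E \<Longrightarrow> 0 \<le> u e \<theta>"
  shows "sampled_cut_cost E \<tau> u S D 0 \<le> cut_capacity_d E \<tau> u a b S"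
  unfolding sampled_cut_cost_def cut_capacity_d_eq_sum_cut_edge_cost
  using assms by (auto intro!: sum_mono sum_mono2 cut_edge_cost_nonneg)

lemma set_integral_unit_shift:
  fixes h :: "real \<Rightarrow> real"
  shows "(LINT \<theta>:{0..<1}|lborel. h (\<theta> + c)) = (LINT \<theta>:{c..<c + 1}|lborel. h \<theta>)"
proof -
  have "(LINT \<theta>:{c..<c + 1}|lborel. h \<theta>) = (LINT \<theta>|lborel. indicator {c..<c + 1} (c + 1 * \<theta>) * h (c + 1 * \<theta>))"
    unfolding set_lebesgue_integral_def by (subst lborel_integral_real_affine[of 1 _ c]) simp_all
  also have "\<dots> = (LINT \<theta>:{0..<1}|lborel. h (\<theta> + c))"
    unfolding set_lebesgue_integral_def by (rule Bochner_Integration.integral_cong) (auto simp: indicator_def add.commute)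
  finally show ?thesis ..
qed

lemma sum_indicator_separated_le:
  fixes D :: "real set"
  assumes "finite D" "\<And>p p'. p \<in> D \<Longrightarrow> p' \<in> D \<Longrightarrow> p \<noteq> p' \<Longrightarrow> 1 \<le> \<bar>p - p'\<bar>"
    and "\<And>p. p \<in> D \<Longrightarrow> a \<le> p \<and> p + 1 \<le> b"
  shows "(\<Sum>p\<in>D. indicator {p..<p + 1} \<theta>) \<le> (indicator {a..b} \<theta> :: real)"
proof -
  define K where "K = {p \<in> D. p \<le> \<theta> \<and> \<theta> < p + 1}"
  have "(\<Sum>p\<in>D. indicator {p..<p + 1} \<theta>) = (\<Sum>p\<in>K. 1 :: real)"
    unfolding K_def using assms(1) by (simp add: sum.inter_filter[symmetric] indicator_def of_bool_def)
  also have "\<dots> \<le> indicator {a..b} \<theta>"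
  proof (cases "K = {}")
    case False
    then obtain p where p: "p \<in> K" by blast
    have "p' = p" if "p' \<in> K" for p'
    proof (rule ccontr)
      assume "p' \<noteq> p"
      then have "1 \<le> \<bar>p' - p\<bar>" using assms(2)[of p' p] that p by (simp add: K_def)
      moreover have "\<bar>p' - p\<bar> < 1" using that p by (simp add: K_def abs_diff_less_iff)
      ultimately show False by simp
    qed
    then have "K = {p}" using p by blast
    moreover have "\<theta> \<in> {a..b}" using p assms(3)[of p] by (simp add: K_def)
    ultimately show ?thesis by simp
  qed simp
  finally show ?thesis .
qed

lemma sum_shifted_set_integrals_le:
  fixes h :: "real \<Rightarrow> real"
  assumes h: "h \<in> borel_measurable borel" "\<And>x. 0 \<le> h x" "\<And>x. h x \<le> B"
    and D: "finite D" "\<And>p p'. p \<in> D \<Longrightarrow> p' \<in> D \<Longrightarrow> p \<noteq> p' \<Longrightarrow> 1 \<le> \<bar>p - p'\<bar>"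
      "\<And>p. p \<in> D \<Longrightarrow> a \<le> p \<and> p + 1 \<le> b"
  shows "(\<Sum>p\<in>D. LINT \<theta>:{0..<1}|lborel. h (\<theta> + p)) \<le> (LINT \<theta>:{a..b}|lborel. h \<theta>)"
proof -
  have integrable: "set_integrable lborel A h" if "A \<in> sets borel" "emeasure lborel A < \<infinity>" for A
    unfolding set_integrable_def
    using that h by (intro integrableI_bounded_set_indicator[where B = B]) auto
  have "(\<Sum>p\<in>D. LINT \<theta>:{0..<1}|lborel. h (\<theta> + p)) = (\<Sum>p\<in>D. LINT \<theta>|lborel. indicator {p..<p + 1} \<theta> * h \<theta>)"
    by (simp only: set_integral_unit_shift) (simp add: set_lebesgue_integral_def)
  also have "\<dots> = (LINT \<theta>|lborel. (\<Sum>p\<in>D. indicator {p..<p + 1} \<theta>) * h \<theta>)"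
    using integrable[of "{_..<_}"] unfolding set_integrable_def
    by (subst Bochner_Integration.integral_sum[symmetric]) (auto simp: sum_distrib_right)
  also have "\<dots> \<le> (LINT \<theta>|lborel. indicator {a..b} \<theta> * h \<theta>)"
  proof (rule Bochner_Integration.integral_mono)
    show "integrable lborel (\<lambda>\<theta>. (\<Sum>p\<in>D. indicator {p..<p + 1} \<theta>) * h \<theta>)"
      using integrable[of "{_..<_}"] unfolding set_integrable_def sum_distrib_right by auto
    show "integrable lborel (\<lambda>\<theta>. indicator {a..b} \<theta> * h \<theta>)"
      using integrable[of "{a..b}"] unfolding set_integrable_def by (simp add: emeasure_lborel_Icc_eq)
    show "(\<Sum>p\<in>D. indicator {p..<p + 1} \<theta>) * h \<theta> \<le> indicator {a..b} \<theta> * h \<theta>" for \<theta>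
      using sum_indicator_separated_le[OF D] h(2) by (rule mult_right_mono)
  qed
  also have "\<dots> = (LINT \<theta>:{a..b}|lborel. h \<theta>)"
    by (simp add: set_lebesgue_integral_def)
  finally show ?thesis .
qed

lemma cut_edge_cost_measurable:
  fixes S :: "nat \<Rightarrow> real \<Rightarrow> bool"
  assumes "{\<theta>. S (fst e) \<theta>} \<in> sets borel" "{\<theta>. S (snd e) \<theta>} \<in> sets borel" "u e \<in> borel_measurable borel"
  shows "cut_edge_cost \<tau> u S e \<in> borel_measurable borel"
proof -
  have [measurable]: "Measurable.pred borel (S (fst e))" "Measurable.pred borel (S (snd e))"
    using assms(1,2) by (simp_all add: pred_def)
  show ?thesis
    unfolding cut_edge_cost_def using assms(3) by measurable
qed

lemma sampled_cut_cost_le_cut_capacity: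
  fixes S :: "nat \<Rightarrow> real \<Rightarrow> bool"
  assumes S: "E \<subseteq> V \<times> V" "\<And>v. v \<in> V \<Longrightarrow> {\<theta>. S v \<theta>} \<in> sets borel"
    and u: "\<And>e. e \<in> E \<Longrightarrow> u e \<in> borel_measurable borel" "\<And>e \<theta>. e \<in> E \<Longrightarrow> 0 \<le> u e \<theta> \<and> u e \<theta> \<le> B"
    and D: "\<And>e. e \<in> E \<Longrightarrow> finite (D e)"
      "\<And>e p p'. e \<in> E \<Longrightarrow> p \<in> D e \<Longrightarrow> p' \<in> D e \<Longrightarrow> p \<noteq> p' \<Longrightarrow> 1 \<le> \<bar>p - p'\<bar>"
      "\<And>e p. e \<in> E \<Longrightarrow> p \<in> D e \<Longrightarrow> a \<le> p \<and> p + 1 \<le> b - \<tau> e"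
  shows "set_integrable lborel {0..<1} (sampled_cut_cost E \<tau> u S D)"
    and "(LINT \<theta>:{0..<1}|lborel. sampled_cut_cost E \<tau> u S D \<theta>) \<le> cut_capacity E \<tau> u a b S"
proof -
  have cost: "cut_edge_cost \<tau> u S e \<in> borel_measurable borel"
      "0 \<le> cut_edge_cost \<tau> u S e x" "cut_edge_cost \<tau> u S e x \<le> B" if "e \<in> E" for e x
  proof -
    have "fst e \<in> V" "snd e \<in> V" using S(1) that by auto
    then show "cut_edge_cost \<tau> u S e \<in> borel_measurable borel"
      using S(2) u(1)[OF that] by (intro cut_edge_cost_measurable)
    show "0 \<le> cut_edge_cost \<tau> u S e x" "cut_edge_cost \<tau> u S e x \<le> B"
      using u(2)[OF that, of x] by (auto simp: cut_edge_cost_def)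
  qed
  define shifted where "shifted e p \<theta> = indicator {0..<1} \<theta> *\<^sub>R cut_edge_cost \<tau> u S e (\<theta> + p)"
    for e p and \<theta> :: real
  have integrable: "integrable lborel (shifted e p)" if "e \<in> E" for e p
    unfolding shifted_def using cost[OF that]
    by (intro integrableI_bounded_set_indicator[where B = B]) auto
  have sampled: "indicator {0..<1} \<theta> *\<^sub>R sampled_cut_cost E \<tau> u S D \<theta> = (\<Sum>e\<in>E. \<Sum>p\<in>D e. shifted e p \<theta>)" for \<theta>
    by (simp add: shifted_def sampled_cut_cost_def sum_distrib_left)
  show "set_integrable lborel {0..<1} (sampled_cut_cost E \<tau> u S D)"
    unfolding set_integrable_def sampled using integrable by (intro Bochner_Integration.integrable_sum)
  have "(LINT \<theta>:{0..<1}|lborel. sampled_cut_cost E \<tau> u S D \<theta>) = (\<Sum>e\<in>E. \<Sum>p\<in>D e. integral\<^sup>L lborel (shifted e p))"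
    unfolding set_lebesgue_integral_def sampled using integrable
    by (simp add: Bochner_Integration.integral_sum Bochner_Integration.integrable_sum)
  also have "\<dots> \<le> (\<Sum>e\<in>E. LINT \<theta>:{a..b - \<tau> e}|lborel. cut_edge_cost \<tau> u S e \<theta>)"
  proof (rule sum_mono)
    fix e assume "e \<in> E"
    show "(\<Sum>p\<in>D e. integral\<^sup>L lborel (shifted e p)) \<le> (LINT \<theta>:{a..b - \<tau> e}|lborel. cut_edge_cost \<tau> u S e \<theta>)"
      unfolding shifted_def set_lebesgue_integral_def[symmetric]
      by (rule sum_shifted_set_integrals_le[OF cost[OF \<open>e \<in> E\<close>] D(1)[OF \<open>e \<in> E\<close>]])
        (use D(2,3)[OF \<open>e \<in> E\<close>] in auto)
  qed
  finally show "(LINT \<theta>:{0..<1}|lborel. sampled_cut_cost E \<tau> u S D \<theta>) \<le> cut_capacity E \<tau> u a b S"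
    by (simp only: cut_capacity_eq_sum_cut_edge_cost)
qed

lemma AE_eq_if_set_integral_le_lower_bound:
  fixes h :: "real \<Rightarrow> real"
  assumes "set_integrable lborel {0..<1} h" "\<And>\<theta>. \<theta> \<in> {0..<1} \<Longrightarrow> c \<le> h \<theta>"
    and "(LINT \<theta>:{0..<1}|lborel. h \<theta>) \<le> c"
  shows "AE \<theta> in lborel. \<theta> \<in> {0..<1} \<longrightarrow> h \<theta> = c"
proof -
  define excess where "excess \<theta> = indicator {0..<1} \<theta> * (h \<theta> - c)" for \<theta> :: real
  have integrable: "integrable lborel excess"
    using assms(1) unfolding excess_def set_integrable_def
    by (simp add: right_diff_distrib integrable_indicator Bochner_Integration.integrable_diff)
  have nonneg: "0 \<le> excess \<theta>" for \<theta>
    using assms(2) by (auto simp: excess_def indicator_def)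
  have "integral\<^sup>L lborel excess = (LINT \<theta>:{0..<1}|lborel. h \<theta>) - c"
    using assms(1) unfolding excess_def set_integrable_def set_lebesgue_integral_def
    by (simp add: right_diff_distrib Bochner_Integration.integral_diff integrable_indicator)
  then have "integral\<^sup>L lborel excess = 0"
    using assms(3) integral_nonneg_AE[of excess lborel] nonneg by auto
  then have "AE \<theta> in lborel. excess \<theta> = 0"
    using integral_nonneg_eq_0_iff_AE[OF integrable] nonneg by simp
  then show ?thesis
    by eventually_elim (auto simp: excess_def)
qed

section \<open>The doubling network\<close>

text \<open>Vertices are the source \<open>0\<close>, \<open>x\<^sub>i = 2i+1\<close> for \<open>i \<le> l\<close> and \<open>y\<^sub>i = 2i+2\<close> for \<open>i \<le> l\<close>, where
  \<open>y\<^sub>l\<close> is the sink.\<close>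

definition node_x :: "nat \<Rightarrow> nat" where "node_x i = 2 * i + 1"

definition node_y :: "nat \<Rightarrow> nat" where "node_y i = 2 * i + 2"

lemma node_x_y_simps [simp]:
  "node_x i = node_x j \<longleftrightarrow> i = j" "node_y i = node_y j \<longleftrightarrow> i = j"
  "node_x i \<noteq> node_y j" "node_y j \<noteq> node_x i"
  "node_x i \<noteq> 0" "0 \<noteq> node_x i" "node_y i \<noteq> 0" "0 \<noteq> node_y i"
  unfolding node_x_def node_y_def by presburger+

lemma node_x_y_parity [simp]:
  "odd (node_x i)" "even (node_y i)" "node_x i div 2 = i" "node_y i div 2 = Suc i"
  unfolding node_x_def node_y_def by simp_all

definition doubling_vertices :: "nat \<Rightarrow> nat set" where
  "doubling_vertices l = {0..node_y l}"

definition doubling_edges :: "nat \<Rightarrow> (nat \<times> nat) set" where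
  "doubling_edges l = {(0, node_x 0), (node_x l, node_y l)} \<union>
     (\<Union>i<l. {(node_x i, node_x (Suc i)), (node_x i, node_y i), (node_y i, node_x (Suc i))})"

definition doubling_transit :: "nat \<Rightarrow> nat \<times> nat \<Rightarrow> 'a::linordered_idom" where
  "doubling_transit l e = (if \<exists>i<l. e = (node_x i, node_y i) then 2 ^ Suc (fst e div 2) else 0)"

definition doubling_capacity :: "nat \<Rightarrow> nat \<times> nat \<Rightarrow> 'a::linordered_idom \<Rightarrow> real" where
  "doubling_capacity l e \<theta> =
     (if e = (0, node_x 0) then (if 0 \<le> \<theta> \<and> \<theta> < 1 then 2 ^ Suc l else 0)
      else if e = (node_x l, node_y l) then 1 else 2 ^ Suc l)"

lemma doubling_edges_cases:
  assumes "e \<in> doubling_edges l"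
  obtains "e = (0, node_x 0)" | "e = (node_x l, node_y l)"
    | i where "i < l" "e = (node_x i, node_x (Suc i))"
    | i where "i < l" "e = (node_x i, node_y i)"
    | i where "i < l" "e = (node_y i, node_x (Suc i))"
  using assms unfolding doubling_edges_def by blast

lemma doubling_edges_memI [simp]:
  "(0, node_x 0) \<in> doubling_edges l" "(node_x l, node_y l) \<in> doubling_edges l"
  "i < l \<Longrightarrow> (node_x i, node_x (Suc i)) \<in> doubling_edges l"
  "i < l \<Longrightarrow> (node_x i, node_y i) \<in> doubling_edges l"
  "i < l \<Longrightarrow> (node_y i, node_x (Suc i)) \<in> doubling_edges l"
  unfolding doubling_edges_def by auto

lemma finite_doubling_edges [simp]: "finite (doubling_edges l)"
  by (simp add: doubling_edges_def)

lemma doubling_edges_forward: "e \<in> doubling_edges l \<Longrightarrow> fst e < snd e"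
  by (erule doubling_edges_cases) (auto simp: node_x_def node_y_def)

lemma doubling_edges_subset: "doubling_edges l \<subseteq> doubling_vertices l \<times> doubling_vertices l"
  by (auto simp: doubling_edges_def doubling_vertices_def node_x_def node_y_def)

lemma doubling_transit_simps [simp]:
  "i < l \<Longrightarrow> doubling_transit l (node_x i, node_y i) = 2 ^ Suc i"
  "doubling_transit l (0, node_x 0) = 0"
  "doubling_transit l (node_x l, node_y l) = 0"
  "doubling_transit l (node_x i, node_x (Suc i)) = 0"
  "doubling_transit l (node_y i, node_x (Suc i)) = 0"
  unfolding doubling_transit_def by (auto simp: node_x_def node_y_def) presburger

lemma doubling_transit_nonneg: "0 \<le> doubling_transit l e"
  by (simp add: doubling_transit_def)

lemma doubling_capacity_simps [simp]:
  "doubling_capacity l (0, node_x 0) \<theta> = (if 0 \<le> \<theta> \<and> \<theta> < 1 then 2 ^ Suc l else 0)"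
  "doubling_capacity l (node_x l, node_y l) \<theta> = 1"
  "doubling_capacity l (node_x i, node_x (Suc i)) \<theta> = 2 ^ Suc l"
  "i < l \<Longrightarrow> doubling_capacity l (node_x i, node_y i) \<theta> = 2 ^ Suc l"
  "doubling_capacity l (node_y i, node_x (Suc i)) \<theta> = 2 ^ Suc l"
  unfolding doubling_capacity_def by auto

lemma doubling_capacity_nonneg: "0 \<le> doubling_capacity l e \<theta>"
  by (simp add: doubling_capacity_def)

lemma doubling_capacity_le: "doubling_capacity l e \<theta> \<le> 2 ^ Suc l"
  using one_le_power[of "2::real" "Suc l"] by (simp add: doubling_capacity_def)

lemma doubling_edges_at_source:
  "{e \<in> doubling_edges l. fst e = 0} = {(0, node_x 0)}" "{e \<in> doubling_edges l. snd e = 0} = {}"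
  unfolding doubling_edges_def by auto

lemma doubling_edges_at_inner_vertices:
  "{e \<in> doubling_edges l. snd e = node_x 0} = {(0, node_x 0)}"
  "{e \<in> doubling_edges l. fst e = node_x l} = {(node_x l, node_y l)}"
  "i < l \<Longrightarrow> {e \<in> doubling_edges l. fst e = node_x i} = {(node_x i, node_x (Suc i)), (node_x i, node_y i)}"
  "i < l \<Longrightarrow> {e \<in> doubling_edges l. snd e = node_x (Suc i)} = {(node_x i, node_x (Suc i)), (node_y i, node_x (Suc i))}"
  "i < l \<Longrightarrow> {e \<in> doubling_edges l. snd e = node_y i} = {(node_x i, node_y i)}"
  "i < l \<Longrightarrow> {e \<in> doubling_edges l. fst e = node_y i} = {(node_y i, node_x (Suc i))}"
  unfolding doubling_edges_def by auto

lemma doubling_inner_vertices_cases: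
  assumes "v \<in> doubling_vertices l - {0, node_y l}"
  obtains "v = node_x 0" | i where "i < l" "v = node_x (Suc i)" | i where "i < l" "v = node_y i"
proof -
  have v: "1 \<le> v" "v \<le> 2 * l + 1"
    using assms by (auto simp: doubling_vertices_def node_y_def)
  show thesis
  proof (cases "odd v")
    case True
    then obtain j where j: "v = 2 * j + 1" by (metis oddE)
    then show thesis
      using that(1,2) v by (cases j) (auto simp: node_x_def)
  next
    case False
    then obtain j where j: "v = 2 * j" by (metis evenE)
    then show thesis
      using that(3)[of "j - 1"] v by (cases j) (auto simp: node_y_def)
  qed
qed

lemma doubling_inner_vertices_memI:
  "node_x 0 \<in> doubling_vertices l - {0, node_y l}"
  "i < l \<Longrightarrow> node_x (Suc i) \<in> doubling_vertices l - {0, node_y l}"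
  "i < l \<Longrightarrow> node_y i \<in> doubling_vertices l - {0, node_y l}"
  unfolding doubling_vertices_def node_x_def node_y_def by auto

section \<open>Flows in the doubling network\<close>

definition capacity_feasible ::
  "(nat \<times> nat) set \<Rightarrow> (nat \<times> nat \<Rightarrow> 'a \<Rightarrow> real) \<Rightarrow> (nat \<times> nat \<Rightarrow> 'a \<Rightarrow> real) \<Rightarrow> bool"
  where
  "capacity_feasible E u g \<longleftrightarrow> (\<forall>e\<in>E. \<forall>\<theta>. 0 \<le> g e \<theta> \<and> g e \<theta> \<le> u e \<theta>)"

definition flow_conservation ::
  "nat set \<Rightarrow> (nat \<times> nat) set \<Rightarrow> nat \<Rightarrow> nat \<Rightarrow> (nat \<times> nat \<Rightarrow> 'a::minus) \<Rightarrow> (nat \<times> nat \<Rightarrow> 'a \<Rightarrow> real) \<Rightarrow> bool"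
  where
  "flow_conservation V E s t \<tau> g \<longleftrightarrow> (\<forall>v\<in>V - {s, t}. \<forall>\<theta>.
     (\<Sum>e\<in>{e\<in>E. snd e = v}. g e (\<theta> - \<tau> e)) = (\<Sum>e\<in>{e\<in>E. fst e = v}. g e \<theta>))"

lemma is_flow_iff:
  "is_flow V E s t \<tau> u a b g \<longleftrightarrow>
     (\<forall>e\<in>E. g e \<in> borel_measurable borel) \<and> capacity_feasible E u g \<and>
     (\<forall>e\<in>E. \<forall>\<theta>. \<not> (a \<le> \<theta> \<and> \<theta> + \<tau> e \<le> b) \<longrightarrow> g e \<theta> = 0) \<and> flow_conservation V E s t \<tau> g"
  by (simp add: is_flow_def capacity_feasible_def flow_conservation_def)

lemma is_flow_d_iff:
  "is_flow_d V E s t \<tau> u a b g \<longleftrightarrow>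
     capacity_feasible E u g \<and>
     (\<forall>e\<in>E. \<forall>\<theta>. \<not> (a \<le> \<theta> \<and> \<theta> + \<tau> e \<le> b) \<longrightarrow> g e \<theta> = 0) \<and> flow_conservation V E s t \<tau> g"
  by (simp add: is_flow_d_def capacity_feasible_def flow_conservation_def)

text \<open>The flow \<open>out i\<close> leaving \<open>x\<^sub>i\<close> splits into \<open>a i\<close> and \<open>b i\<close>, and \<open>b i\<close> re-enters \<open>x\<^sub>i\<^sub>+\<^sub>1\<close> delayed
  by \<open>2\<^sup>i\<^sup>+\<^sup>1\<close>. By induction over the stages, an inflow \<open>r\<close> supported in \<open>[0,1)\<close> leaves \<open>x\<^sub>i\<close> only during
  the pulse train, and the \<open>2\<^sup>i\<close> delayed copies of each instant of \<open>[0,1)\<close> carry all of it.\<close>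
locale splitting_tree =
  fixes l :: nat and r :: "'a::linordered_idom \<Rightarrow> real" and a b out :: "nat \<Rightarrow> 'a \<Rightarrow> real"
  assumes nonneg: "\<And>i \<theta>. i < l \<Longrightarrow> 0 \<le> a i \<theta>" "\<And>i \<theta>. i < l \<Longrightarrow> 0 \<le> b i \<theta>"
    and out_split: "\<And>i \<theta>. i < l \<Longrightarrow> out i \<theta> = a i \<theta> + b i \<theta>"
    and source: "\<And>\<theta>. out 0 \<theta> = r \<theta>" "\<And>\<theta>. \<not> (0 \<le> \<theta> \<and> \<theta> < 1) \<Longrightarrow> r \<theta> = 0"
    and merge: "\<And>i \<theta>. i < l \<Longrightarrow> out (Suc i) \<theta> = a i \<theta> + b i (\<theta> - 2 ^ Suc i)"
begin

lemma parts_vanish: "i < l \<Longrightarrow> out i \<theta> = 0 \<Longrightarrow> a i \<theta> = 0 \<and> b i \<theta> = 0"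
  using out_split[of i \<theta>] nonneg[of i \<theta>] by simp

lemma out_support: "i \<le> l \<Longrightarrow> \<not> pulse_train i \<theta> \<Longrightarrow> out i \<theta> = 0"
proof (induction i arbitrary: \<theta>)
  case 0
  then show ?case using source by (simp add: pulse_train_0)
next
  case (Suc i)
  then have "out i \<theta> = 0" "out i (\<theta> - 2 ^ Suc i) = 0"
    by (simp_all add: pulse_train_Suc)
  then show ?case
    using Suc.prems(1) merge[of i \<theta>] parts_vanish[of i] by simp
qed

lemma sum_out_pulse_starts:
  assumes "i \<le> l" "0 \<le> \<theta>" "\<theta> < 1"
  shows "(\<Sum>p\<in>pulse_starts i. out i (\<theta> + p)) = r \<theta>"
  using assms(1)
proof (induction i)
  case 0
  then show ?case using source by simp
next
  case (Suc i)
  then have i: "i < l" by simp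
  have early: "b i (\<theta> + p - 2 ^ Suc i) = 0" if "p \<in> pulse_starts i" for p
  proof -
    have "\<not> pulse_train i (\<theta> + p - 2 ^ Suc i)"
      using pulse_starts_bounds[OF that] \<open>\<theta> < 1\<close> pulse_train_bounds(1) by force
    then show ?thesis using out_support i parts_vanish by simp
  qed
  have late: "a i (\<theta> + p + 2 ^ Suc i) = 0" if "p \<in> pulse_starts i" for p
  proof -
    have "\<not> pulse_train i (\<theta> + p + 2 ^ Suc i)"
      using pulse_starts_bounds[OF that] \<open>0 \<le> \<theta>\<close> pulse_train_bounds(2) by force
    then show ?thesis using out_support i parts_vanish by simp
  qed
  have "(\<Sum>p\<in>pulse_starts (Suc i). out (Suc i) (\<theta> + p))
      = (\<Sum>p\<in>pulse_starts i. a i (\<theta> + p)) + (\<Sum>p\<in>pulse_starts i. b i (\<theta> + p))"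
    unfolding sum_pulse_starts_Suc merge[OF i] using early late by (simp add: add.assoc)
  also have "\<dots> = (\<Sum>p\<in>pulse_starts i. out i (\<theta> + p))"
    by (simp add: out_split[OF i] sum.distrib)
  also have "\<dots> = r \<theta>"
    using Suc.IH i by simp
  finally show ?case .
qed

end

lemma doubling_source_pulse:
  assumes "capacity_feasible (doubling_edges l) (doubling_capacity l) g" "\<not> (0 \<le> \<theta> \<and> \<theta> < 1)"
  shows "g (0, node_x 0) \<theta> = 0"
  using assms unfolding capacity_feasible_def
  by (metis doubling_capacity_simps(1) doubling_edges_memI(1) order_antisym)

lemma doubling_sink_edge_le_1:
  assumes "capacity_feasible (doubling_edges l) (doubling_capacity l) g"
  shows "0 \<le> g (node_x l, node_y l) \<theta>" "g (node_x l, node_y l) \<theta> \<le> 1"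
  using assms unfolding capacity_feasible_def by (metis doubling_capacity_simps(2) doubling_edges_memI(2))+

lemma doubling_flow_structure:
  fixes g :: "nat \<times> nat \<Rightarrow> 'a::linordered_idom \<Rightarrow> real"
  assumes feasible: "capacity_feasible (doubling_edges l) (doubling_capacity l) g"
    and conservation: "flow_conservation (doubling_vertices l) (doubling_edges l) 0 (node_y l) (doubling_transit l) g"
  shows doubling_flow_sink_support: "\<not> pulse_train l \<theta> \<Longrightarrow> g (node_x l, node_y l) \<theta> = 0"
    and doubling_flow_source_eq_sum:
      "0 \<le> \<theta> \<Longrightarrow> \<theta> < 1 \<Longrightarrow> g (0, node_x 0) \<theta> = (\<Sum>p\<in>pulse_starts l. g (node_x l, node_y l) (\<theta> + p))"
proof -
  define out where "out i \<theta> = (\<Sum>e\<in>{e \<in> doubling_edges l. fst e = node_x i}. g e \<theta>)" for i \<theta>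
  have balance: "(\<Sum>e\<in>{e \<in> doubling_edges l. snd e = v}. g e (\<theta> - doubling_transit l e))
      = (\<Sum>e\<in>{e \<in> doubling_edges l. fst e = v}. g e \<theta>)"
    if "v \<in> doubling_vertices l - {0, node_y l}" for v \<theta>
    using conservation that unfolding flow_conservation_def by blast
  have out_last: "out l \<theta> = g (node_x l, node_y l) \<theta>" for \<theta>
    by (simp add: out_def doubling_edges_at_inner_vertices)
  have nonneg: "0 \<le> g (node_x i, node_x (Suc i)) \<theta>" "0 \<le> g (node_x i, node_y i) \<theta>" if "i < l" for i \<theta>
    using feasible that unfolding capacity_feasible_def by simp_all
  have split: "out i \<theta> = g (node_x i, node_x (Suc i)) \<theta> + g (node_x i, node_y i) \<theta>" if "i < l" for i \<theta>
    using that by (simp add: out_def doubling_edges_at_inner_vertices)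
  have source: "out 0 \<theta> = g (0, node_x 0) \<theta>" for \<theta>
    using balance[OF doubling_inner_vertices_memI(1), of \<theta>]
    by (simp add: out_def doubling_edges_at_inner_vertices)
  have merge: "out (Suc i) \<theta> = g (node_x i, node_x (Suc i)) \<theta> + g (node_x i, node_y i) (\<theta> - 2 ^ Suc i)"
    if "i < l" for i \<theta>
  proof -
    have "g (node_x i, node_y i) (\<theta> - 2 ^ Suc i) = g (node_y i, node_x (Suc i)) \<theta>"
      using balance[OF doubling_inner_vertices_memI(3)[OF that], of \<theta>] that
      by (simp add: doubling_edges_at_inner_vertices)
    moreover have "g (node_x i, node_x (Suc i)) \<theta> + g (node_y i, node_x (Suc i)) \<theta> = out (Suc i) \<theta>"
      using balance[OF doubling_inner_vertices_memI(2)[OF that], of \<theta>] that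
      by (simp add: out_def doubling_edges_at_inner_vertices)
    ultimately show ?thesis by simp
  qed
  interpret tree: splitting_tree l "g (0, node_x 0)" "\<lambda>i. g (node_x i, node_x (Suc i))" "\<lambda>i. g (node_x i, node_y i)" out
    using nonneg split source doubling_source_pulse[OF feasible] merge by unfold_locales
  show "\<not> pulse_train l \<theta> \<Longrightarrow> g (node_x l, node_y l) \<theta> = 0"
    using tree.out_support[of l \<theta>] by (simp add: out_last)
  show "0 \<le> \<theta> \<Longrightarrow> \<theta> < 1 \<Longrightarrow> g (0, node_x 0) \<theta> = (\<Sum>p\<in>pulse_starts l. g (node_x l, node_y l) (\<theta> + p))"
    using tree.sum_out_pulse_starts[of l \<theta>] by (simp add: out_last)
qed

text \<open>The maximum flow: \<open>2\<^sup>l\<close> units enter during \<open>[0,1)\<close>; each of the \<open>2\<^sup>i\<close> pulses leaving \<open>x\<^sub>i\<close>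
  carries rate \<open>2\<^sup>l\<^sup>-\<^sup>i\<close>, split evenly between the direct edge and the detour through \<open>y\<^sub>i\<close>.
  Edges are distinguished by the parity of their tail.\<close>
definition doubling_flow :: "nat \<Rightarrow> nat \<times> nat \<Rightarrow> 'a::linordered_idom \<Rightarrow> real" where
  "doubling_flow l e \<theta> =
     (if e = (0, node_x 0) then (if 0 \<le> \<theta> \<and> \<theta> < 1 then 2 ^ l else 0)
      else if e = (node_x l, node_y l) then (if pulse_train l \<theta> then 1 else 0)
      else if odd (fst e) then (if pulse_train (fst e div 2) \<theta> then 2 ^ (l - Suc (fst e div 2)) else 0)
      else (if pulse_train (fst e div 2 - 1) (\<theta> - 2 ^ (fst e div 2)) then 2 ^ (l - fst e div 2) else 0))"

lemma doubling_flow_simps [simp]: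
  "doubling_flow l (0, node_x 0) \<theta> = (if 0 \<le> \<theta> \<and> \<theta> < 1 then 2 ^ l else 0)"
  "doubling_flow l (node_x l, node_y l) \<theta> = (if pulse_train l \<theta> then 1 else 0)"
  "doubling_flow l (node_x i, node_x (Suc i)) \<theta> = (if pulse_train i \<theta> then 2 ^ (l - Suc i) else 0)"
  "i < l \<Longrightarrow> doubling_flow l (node_x i, node_y i) \<theta> = (if pulse_train i \<theta> then 2 ^ (l - Suc i) else 0)"
  "doubling_flow l (node_y i, node_x (Suc i)) \<theta> = (if pulse_train i (\<theta> - 2 ^ Suc i) then 2 ^ (l - Suc i) else 0)"
  unfolding doubling_flow_def by simp_all

lemma doubling_flow_feasible:
  "capacity_feasible (doubling_edges l) (doubling_capacity l) (doubling_flow l)"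
  unfolding capacity_feasible_def
proof (intro ballI allI)
  fix e and \<theta> :: 'a
  assume "e \<in> doubling_edges l"
  moreover have "(2::real) ^ l \<le> 2 ^ Suc l" "(2::real) ^ (l - Suc i) \<le> 2 ^ Suc l" for i
    by (rule power_increasing; simp)+
  ultimately show "0 \<le> doubling_flow l e \<theta> \<and> doubling_flow l e \<theta> \<le> doubling_capacity l e \<theta>"
    by (cases rule: doubling_edges_cases) auto
qed

lemma doubling_flow_conservation:
  "flow_conservation (doubling_vertices l) (doubling_edges l) 0 (node_y l) (doubling_transit l) (doubling_flow l)"
  unfolding flow_conservation_def
proof (intro ballI allI)
  fix v and \<theta> :: 'a
  have half: "(2::real) ^ (l - Suc i) + 2 ^ (l - Suc i) = 2 ^ (l - i)" if "i < l" for i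
    using that by (metis Suc_diff_Suc mult_2 power_Suc)
  assume "v \<in> doubling_vertices l - {0, node_y l}"
  then show "(\<Sum>e\<in>{e \<in> doubling_edges l. snd e = v}. doubling_flow l e (\<theta> - doubling_transit l e))
      = (\<Sum>e\<in>{e \<in> doubling_edges l. fst e = v}. doubling_flow l e \<theta>)"
  proof (cases rule: doubling_inner_vertices_cases)
    case 1
    then show ?thesis
      using half[of 0] by (cases "l = 0") (auto simp: doubling_edges_at_inner_vertices pulse_train_0)
  next
    case (2 i)
    have "(if pulse_train i \<theta> then 2 ^ (l - Suc i) else 0)
        + (if pulse_train i (\<theta> - 2 ^ Suc i) then 2 ^ (l - Suc i) else 0)
        = (if pulse_train (Suc i) \<theta> then (2::real) ^ (l - Suc i) else 0)"
      using pulse_train_Suc[of i \<theta>] pulse_train_disjoint[of i \<theta>] by auto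
    with 2 show ?thesis
      using half[of "Suc i"] by (cases "Suc i = l") (auto simp: doubling_edges_at_inner_vertices)
  next
    case (3 i)
    then show ?thesis by (simp add: doubling_edges_at_inner_vertices)
  qed
qed

lemma doubling_flow_window:
  assumes "e \<in> doubling_edges l" "doubling_flow l e \<theta> \<noteq> 0"
  shows "0 \<le> \<theta> \<and> \<theta> + doubling_transit l e \<le> 2 ^ Suc l"
proof -
  have double: "(2::'a) ^ Suc i + 2 ^ Suc i \<le> 2 ^ Suc l" if "i < l" for i
    using that power_increasing[of "Suc (Suc i)" "Suc l" "2::'a"] by simp
  have single: "(2::'a) ^ Suc i \<le> 2 ^ Suc l" if "i < l" for i
    using that by (intro power_increasing) simp_all
  have one: "(1::'a) \<le> 2 ^ Suc l"
    by (rule one_le_power) simp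
  from assms(1) show ?thesis
  proof (cases rule: doubling_edges_cases)
    case 1
    then show ?thesis using assms(2) one by (auto split: if_splits)
  next
    case 2
    then show ?thesis using assms(2) pulse_train_bounds[of l \<theta>] by (auto split: if_splits)
  next
    case (3 i)
    with assms(2) have "pulse_train i \<theta>" by (auto split: if_splits)
    then have "0 \<le> \<theta>" "\<theta> < 2 ^ Suc l"
      using pulse_train_bounds[of i \<theta>] single[OF 3(1)] by linarith+
    then show ?thesis using 3 by simp
  next
    case (4 i)
    with assms(2) have "pulse_train i \<theta>" by (auto split: if_splits)
    then have "0 \<le> \<theta>" "\<theta> + 2 ^ Suc i < 2 ^ Suc l"
      using pulse_train_bounds[of i \<theta>] double[OF 4(1)] by linarith+
    then show ?thesis using 4 by simp
  next
    case (5 i)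
    with assms(2) have "pulse_train i (\<theta> - 2 ^ Suc i)" by (auto split: if_splits)
    then have "0 \<le> \<theta>" "\<theta> < 2 ^ Suc l"
      using pulse_train_bounds[of i "\<theta> - 2 ^ Suc i"] double[OF 5(1)] by linarith+
    then show ?thesis using 5 by simp
  qed
qed

lemma doubling_flow_is_flow_d:
  assumes "k1 \<le> 0" "2 ^ Suc l \<le> k2"
  shows "is_flow_d (doubling_vertices l) (doubling_edges l) 0 (node_y l) (doubling_transit l) (doubling_capacity l)
    k1 k2 (doubling_flow l)"
  unfolding is_flow_d_iff
proof (intro conjI doubling_flow_feasible doubling_flow_conservation ballI allI impI)
  fix e and \<theta> :: int
  assume "e \<in> doubling_edges l" "\<not> (k1 \<le> \<theta> \<and> \<theta> + doubling_transit l e \<le> k2)"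
  then show "doubling_flow l e \<theta> = 0"
    using doubling_flow_window[of e l \<theta>] assms by fastforce
qed

lemma pulse_train_measurable [measurable]: "Measurable.pred borel (pulse_train i :: real \<Rightarrow> bool)"
proof -
  have "{\<theta>::real. pulse_train i \<theta>} = (\<Union>p\<in>pulse_starts i. {p..<p + 1})"
    by (auto simp: pulse_train_def)
  moreover have "(\<Union>p\<in>pulse_starts i. {p..<p + 1 :: real}) \<in> sets borel"
    by (intro sets.finite_UN) auto
  ultimately show ?thesis by (simp add: pred_def)
qed

lemma doubling_flow_measurable [measurable]: "(doubling_flow l e :: real \<Rightarrow> real) \<in> borel_measurable borel"
  unfolding doubling_flow_def by measurable

lemma doubling_flow_is_flow:
  assumes "k1 \<le> 0" "2 ^ Suc l \<le> k2"
  shows "is_flow (doubling_vertices l) (doubling_edges l) 0 (node_y l) (doubling_transit l) (doubling_capacity l)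
    k1 k2 (doubling_flow l)"
  unfolding is_flow_iff
proof (intro conjI doubling_flow_feasible doubling_flow_conservation ballI allI impI doubling_flow_measurable)
  fix e and \<theta> :: real
  assume "e \<in> doubling_edges l" "\<not> (k1 \<le> \<theta> \<and> \<theta> + doubling_transit l e \<le> k2)"
  then show "doubling_flow l e \<theta> = 0"
    using doubling_flow_window[of e l \<theta>] assms by fastforce
qed

lemma doubling_flow_value_eq:
  "flow_value (doubling_edges l) 0 (doubling_transit l) g = (LINT \<theta>|lborel. g (0, node_x 0) \<theta>)"
  by (simp add: flow_value_def doubling_edges_at_source)

lemma doubling_flow_value_d_eq:
  "flow_value_d (doubling_edges l) 0 (doubling_transit l) a b g = (\<Sum>\<theta>\<in>{a..b}. g (0, node_x 0) \<theta>)"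
  by (simp add: flow_value_d_def doubling_edges_at_source)

lemma eq_one_if_card_le_sum:
  fixes f :: "'a \<Rightarrow> real"
  assumes "finite A" "\<And>x. x \<in> A \<Longrightarrow> f x \<le> 1" "real (card A) \<le> sum f A" "x \<in> A"
  shows "f x = 1"
proof -
  have "(\<Sum>x\<in>A. 1 - f x) = 0"
    using assms(1-3) sum_nonneg[of A "\<lambda>x. 1 - f x"] by (simp add: sum_subtractf)
  then show ?thesis
    using sum_nonneg_eq_0_iff[OF assms(1), of "\<lambda>x. 1 - f x"] assms(2,4) by simp
qed

text \<open>The value of a maximum flow is at least that of \<^const>\<open>doubling_flow\<close>, i.e. \<open>2\<^sup>l\<close>, and by
  the splitting structure it is a sum of \<open>2\<^sup>l\<close> values of the sink edge, each at most \<open>1\<close>.\<close>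
lemma doubling_max_flow_d_saturates:
  assumes "is_max_flow_d (doubling_vertices l) (doubling_edges l) 0 (node_y l) (doubling_transit l)
      (doubling_capacity l) k1 k2 g"
    and "k1 \<le> 0" "2 ^ Suc l \<le> k2" "p \<in> pulse_starts l"
  shows "g (node_x l, node_y l) p = 1"
proof -
  have flow: "capacity_feasible (doubling_edges l) (doubling_capacity l) g"
      "flow_conservation (doubling_vertices l) (doubling_edges l) 0 (node_y l) (doubling_transit l) g"
    using assms(1) by (simp_all add: is_max_flow_d_def is_flow_d_iff)
  have "k1 \<le> 0" "0 \<le> k2"
    using assms(2,3) zero_le_power[of "2::int" "Suc l"] by linarith+
  then have value_at_0: "flow_value_d (doubling_edges l) 0 (doubling_transit l) k1 k2 h = h (0, node_x 0) 0"
    if "\<And>\<theta>. \<theta> \<noteq> 0 \<Longrightarrow> h (0, node_x 0) \<theta> = 0" for h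
    unfolding doubling_flow_value_d_eq using that by (subst sum.remove[of _ 0]) (auto intro: sum.neutral)
  have "2 ^ l = flow_value_d (doubling_edges l) 0 (doubling_transit l) k1 k2 (doubling_flow l)"
    by (subst value_at_0) auto
  also have "\<dots> \<le> flow_value_d (doubling_edges l) 0 (doubling_transit l) k1 k2 g"
    using assms(1) doubling_flow_is_flow_d[OF assms(2,3)] unfolding is_max_flow_d_def by blast
  also have "\<dots> = (\<Sum>p\<in>pulse_starts l. g (node_x l, node_y l) p)"
    using value_at_0[of g] doubling_source_pulse[OF flow(1)] doubling_flow_source_eq_sum[OF flow, of 0] by simp
  finally show ?thesis
    using doubling_sink_edge_le_1[OF flow(1)] assms(4) by (intro eq_one_if_card_le_sum) auto
qed

lemma doubling_max_flow_saturates: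
  assumes "is_max_flow (doubling_vertices l) (doubling_edges l) 0 (node_y l) (doubling_transit l)
      (doubling_capacity l) k1 k2 g"
    and "k1 \<le> 0" "2 ^ Suc l \<le> k2"
  shows "AE \<theta> in lborel. \<theta> \<in> {0..<1} \<longrightarrow> (\<forall>p\<in>pulse_starts l. g (node_x l, node_y l) (\<theta> + p) = 1)"
proof -
  have flow: "capacity_feasible (doubling_edges l) (doubling_capacity l) g"
      "flow_conservation (doubling_vertices l) (doubling_edges l) 0 (node_y l) (doubling_transit l) g"
      "g (node_x l, node_y l) \<in> borel_measurable borel"
    using assms(1) by (simp_all add: is_max_flow_def is_flow_iff)
  define total where "total \<theta> = (\<Sum>p\<in>pulse_starts l. g (node_x l, node_y l) (\<theta> + p))" for \<theta> :: real
  have total_bounds: "0 \<le> total \<theta>" "total \<theta> \<le> 2 ^ l" for \<theta>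
    using sum_mono[of "pulse_starts l" "\<lambda>p. g (node_x l, node_y l) (\<theta> + p)" "\<lambda>_. 1"]
      doubling_sink_edge_le_1[OF flow(1)] unfolding total_def by (auto intro: sum_nonneg)
  have integrable: "set_integrable lborel {0..<1} total"
    unfolding set_integrable_def total_def using flow(3) total_bounds
    by (intro integrableI_bounded_set_indicator[where B = "2 ^ l"]) (auto simp: total_def)
  have value_eq: "flow_value (doubling_edges l) 0 (doubling_transit l) g = (LINT \<theta>:{0..<1}|lborel. total \<theta>)"
    unfolding doubling_flow_value_eq set_lebesgue_integral_def
    using doubling_source_pulse[OF flow(1)] doubling_flow_source_eq_sum[OF flow(1,2)]
    by (intro Bochner_Integration.integral_cong) (auto simp: total_def indicator_def)
  have "2 ^ l = flow_value (doubling_edges l) 0 (doubling_transit l) (doubling_flow l :: _ \<Rightarrow> real \<Rightarrow> real)"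
  proof -
    have "doubling_flow l (0, node_x 0) = (\<lambda>\<theta>::real. 2 ^ l * indicator {0..<1} \<theta>)"
      by (auto simp: indicator_def)
    then show ?thesis unfolding doubling_flow_value_eq by simp
  qed
  also have "\<dots> \<le> (LINT \<theta>:{0..<1}|lborel. total \<theta>)"
    using assms(1) doubling_flow_is_flow[OF assms(2,3)] value_eq unfolding is_max_flow_def by metis
  finally have "(LINT \<theta>:{0..<1}|lborel. - total \<theta>) \<le> - (2 ^ l)"
    using set_integral_uminus[OF integrable] by simp
  then have "AE \<theta> in lborel. \<theta> \<in> {0..<1} \<longrightarrow> - total \<theta> = - (2 ^ l)"
    using integrable total_bounds
    by (intro AE_eq_if_set_integral_le_lower_bound) (auto simp: set_integrable_def)
  then show ?thesis
  proof (rule AE_mp, intro AE_I2 impI ballI)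
    fix \<theta> p :: real
    assume "\<theta> \<in> {0..<1} \<longrightarrow> - total \<theta> = - (2 ^ l)" "\<theta> \<in> {0..<1}" "p \<in> pulse_starts l"
    then show "g (node_x l, node_y l) (\<theta> + p) = 1"
      using doubling_sink_edge_le_1[OF flow(1)] unfolding total_def
      by (intro eq_one_if_card_le_sum[where A = "pulse_starts l"]) auto
  qed
qed

lemma enat_two_power: "enat (2 ^ l) = 2 ^ l"
  by (simp add: of_nat_eq_enat[symmetric])

lemma doubling_max_flow_inf_d_complexity:
  assumes "is_max_flow_inf_d (doubling_vertices l) (doubling_edges l) 0 (node_y l) (doubling_transit l)
      (doubling_capacity l) f"
  shows "2 ^ l \<le> flow_complexity_d (doubling_edges l) f"
proof -
  obtain k1 k2 g where k: "k1 \<le> -1" "2 ^ Suc l \<le> k2"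
    and g: "is_max_flow_d (doubling_vertices l) (doubling_edges l) 0 (node_y l) (doubling_transit l)
      (doubling_capacity l) k1 k2 g"
    and agree: "\<forall>e\<in>doubling_edges l. \<forall>\<theta>\<in>{-1..2 ^ Suc l}. g e \<theta> = f e \<theta>"
    using max_flow_inf_d_restrict[OF assms] by blast
  have flow: "capacity_feasible (doubling_edges l) (doubling_capacity l) g"
      "flow_conservation (doubling_vertices l) (doubling_edges l) 0 (node_y l) (doubling_transit l) g"
    using g by (simp_all add: is_max_flow_d_def is_flow_d_iff)
  have "f (node_x l, node_y l) (p - 1) = 0" "f (node_x l, node_y l) p = 1" if "p \<in> pulse_starts l" for p
  proof -
    have "p - 1 \<in> {-1..2 ^ Suc l}" "p \<in> {-1..2 ^ Suc l}"
      using pulse_starts_bounds[OF that] by auto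
    moreover have "g (node_x l, node_y l) (p - 1) = 0"
      using doubling_flow_sink_support[OF flow] pulse_train_gap[of 0 p l l] that by simp
    moreover have "g (node_x l, node_y l) p = 1"
      using doubling_max_flow_d_saturates[OF g _ k(2) that] k(1) by simp
    ultimately show "f (node_x l, node_y l) (p - 1) = 0" "f (node_x l, node_y l) p = 1"
      using agree by auto
  qed
  then have "2 ^ l \<le> nchanges_d (f (node_x l, node_y l))"
    using card_le_nchanges_d[of "pulse_starts l" "f (node_x l, node_y l)"] by (simp add: enat_two_power)
  also have "\<dots> \<le> flow_complexity_d (doubling_edges l) f"
    unfolding flow_complexity_d_def by (rule member_le_sum) simp_all
  finally show ?thesis .
qed

lemma doubling_max_flow_inf_complexity:
  assumes "is_max_flow_inf (doubling_vertices l) (doubling_edges l) 0 (node_y l) (doubling_transit l)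
      (doubling_capacity l) f"
  shows "2 ^ l \<le> flow_complexity (doubling_edges l) f"
proof -
  obtain k1 k2 g where k: "k1 \<le> -1" "2 ^ Suc l \<le> k2"
    and g: "is_max_flow (doubling_vertices l) (doubling_edges l) 0 (node_y l) (doubling_transit l)
      (doubling_capacity l) k1 k2 g"
    and agree: "\<forall>e\<in>doubling_edges l. \<forall>\<theta>\<in>{-1..2 ^ Suc l}. g e \<theta> = f e \<theta>"
    using max_flow_inf_restrict[OF assms] by blast
  have flow: "capacity_feasible (doubling_edges l) (doubling_capacity l) g"
      "flow_conservation (doubling_vertices l) (doubling_edges l) 0 (node_y l) (doubling_transit l) g"
    using g by (simp_all add: is_max_flow_def is_flow_iff)
  have saturated: "AE \<theta> in lborel. \<theta> \<in> {0..<1} \<longrightarrow> (\<forall>p\<in>pulse_starts l. g (node_x l, node_y l) (\<theta> + p) = 1)"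
    using doubling_max_flow_saturates[OF g _ k(2)] k(1) by simp
  have "pulse_starts l \<subseteq> changes (f (node_x l, node_y l))"
  proof
    fix p :: real assume p: "p \<in> pulse_starts l"
    show "p \<in> changes (f (node_x l, node_y l))"
    proof (rule jump_in_changes)
      show "AE \<theta> in lborel. \<theta> \<in> {0..<1} \<longrightarrow>
          f (node_x l, node_y l) (p + \<theta>) = 1 \<and> f (node_x l, node_y l) (p + \<theta> - 1) = 0"
        using saturated
      proof (rule AE_mp, intro AE_I2 impI)
        fix \<theta> :: real
        assume "\<theta> \<in> {0..<1} \<longrightarrow> (\<forall>p\<in>pulse_starts l. g (node_x l, node_y l) (\<theta> + p) = 1)" "\<theta> \<in> {0..<1}"
        moreover have "p + \<theta> \<in> {-1..2 ^ Suc l}" "p + \<theta> - 1 \<in> {-1..2 ^ Suc l}"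
          using pulse_starts_bounds[OF p] \<open>\<theta> \<in> {0..<1}\<close> by auto
        moreover have "g (node_x l, node_y l) (\<theta> + p - 1) = 0"
          using doubling_flow_sink_support[OF flow] pulse_train_gap[of \<theta> p l l] p \<open>\<theta> \<in> {0..<1}\<close> by simp
        ultimately show "f (node_x l, node_y l) (p + \<theta>) = 1 \<and> f (node_x l, node_y l) (p + \<theta> - 1) = 0"
          using agree p by (auto simp: add.commute)
      qed
    qed simp
  qed
  then have "2 ^ l \<le> nchanges (f (node_x l, node_y l))"
    using card_le_nchanges[of "pulse_starts l" "f (node_x l, node_y l)"] by (simp add: enat_two_power)
  also have "\<dots> \<le> flow_complexity (doubling_edges l) f"
    unfolding flow_complexity_def by (rule member_le_sum) simp_all
  finally show ?thesis .
qed

section \<open>Cuts in the doubling network\<close>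

text \<open>The minimum cut: \<open>x\<^sub>i\<close> is on the source side exactly during the pulse train \<open>P\<^sub>i\<close> and \<open>y\<^sub>i\<close>
  exactly during its delayed copy, so that only the sink edge is cut, during \<open>P\<^sub>l\<close>.\<close>
definition doubling_cut :: "nat \<Rightarrow> nat \<Rightarrow> 'a::linordered_idom \<Rightarrow> bool" where
  "doubling_cut l v \<theta> \<longleftrightarrow>
     (if v = 0 then True else if v = node_y l then False
      else if odd v then pulse_train (v div 2) \<theta>
      else pulse_train (v div 2 - 1) (\<theta> - 2 ^ (v div 2)))"

lemma doubling_cut_simps [simp]:
  "doubling_cut l 0 \<theta>" "\<not> doubling_cut l (node_y l) \<theta>"
  "doubling_cut l (node_x i) \<theta> \<longleftrightarrow> pulse_train i \<theta>"
  "i < l \<Longrightarrow> doubling_cut l (node_y i) \<theta> \<longleftrightarrow> pulse_train i (\<theta> - 2 ^ Suc i)"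
  unfolding doubling_cut_def by simp_all

lemma doubling_cut_edge_cost:
  assumes "e \<in> doubling_edges l"
  shows "cut_edge_cost (doubling_transit l) (doubling_capacity l) (doubling_cut l) e \<theta>
    = (if e = (node_x l, node_y l) \<and> pulse_train l \<theta> then 1 else 0)"
  using assms by (cases rule: doubling_edges_cases) (auto simp: cut_edge_cost_def pulse_train_0 pulse_train_Suc)

lemma doubling_cut_is_cut_d: "is_cut_d 0 (node_y l) k1 k2 (doubling_cut l)"
  by (simp add: is_cut_d_def)

lemma doubling_cut_is_cut: "is_cut (doubling_vertices l) 0 (node_y l) k1 k2 (doubling_cut l)"
proof -
  have "Measurable.pred borel (doubling_cut l v :: real \<Rightarrow> bool)" for v
    unfolding doubling_cut_def by measurable
  then show ?thesis by (simp add: is_cut_def pred_def)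
qed

lemma sum_eq_single_nonzero:
  "finite A \<Longrightarrow> x \<in> A \<Longrightarrow> (\<And>y. y \<in> A \<Longrightarrow> y \<noteq> x \<Longrightarrow> g y = 0) \<Longrightarrow> sum g A = g x"
  by (subst sum.mono_neutral_right[of A "{x}"]) auto

lemma doubling_cut_capacity_d_le:
  "cut_capacity_d (doubling_edges l) (doubling_transit l) (doubling_capacity l) a b (doubling_cut l) \<le> 2 ^ l"
proof -
  have "cut_capacity_d (doubling_edges l) (doubling_transit l) (doubling_capacity l) a b (doubling_cut l)
      = (\<Sum>\<theta>\<in>{a..b}. if pulse_train l \<theta> then 1 else 0)"
    unfolding cut_capacity_d_eq_sum_cut_edge_cost
    by (subst sum_eq_single_nonzero[where x = "(node_x l, node_y l)"]) (auto simp: doubling_cut_edge_cost)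
  also have "\<dots> = real (card {\<theta> \<in> {a..b}. pulse_train l \<theta>})"
    by (simp add: sum.inter_filter[symmetric])
  also have "\<dots> \<le> real (card (pulse_starts l :: int set))"
    by (intro of_nat_mono card_mono) (auto simp: pulse_train_def)
  finally show ?thesis by simp
qed

lemma doubling_cut_capacity_le:
  "cut_capacity (doubling_edges l) (doubling_transit l) (doubling_capacity l) a b (doubling_cut l) \<le> 2 ^ l"
proof -
  have "cut_capacity (doubling_edges l) (doubling_transit l) (doubling_capacity l) a b (doubling_cut l)
      = (LINT \<theta>|lborel. indicator {a..b::real} \<theta> * (if pulse_train l \<theta> then 1 else 0))"
    unfolding cut_capacity_eq_sum_cut_edge_cost set_lebesgue_integral_def
    by (subst sum_eq_single_nonzero[where x = "(node_x l, node_y l)"]) (auto simp: doubling_cut_edge_cost)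
  also have "\<dots> \<le> (LINT \<theta>|lborel. (\<Sum>p\<in>pulse_starts l. indicator {p..<p + 1::real} \<theta>))"
  proof (rule Bochner_Integration.integral_mono)
    show "integrable lborel (\<lambda>\<theta>. indicator {a..b::real} \<theta> * (if pulse_train l \<theta> then 1 else 0 :: real))"
      using integrableI_bounded_set_indicator[of "{a..b}" lborel "\<lambda>\<theta>. if pulse_train l \<theta> then 1 else 0 :: real" 1]
      by (simp add: emeasure_lborel_Icc_eq)
    show "integrable lborel (\<lambda>\<theta>. \<Sum>p\<in>pulse_starts l. indicator {p..<p + 1::real} \<theta> :: real)"
      by (intro Bochner_Integration.integrable_sum) auto
    show "indicator {a..b::real} \<theta> * (if pulse_train l \<theta> then 1 else 0)
        \<le> (\<Sum>p\<in>pulse_starts l. indicator {p..<p + 1::real} \<theta> :: real)"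
      for \<theta>
    proof (cases "pulse_train l \<theta>")
      case True
      then obtain p where "p \<in> pulse_starts l" "\<theta> \<in> {p..<p + 1}"
        by (auto simp: pulse_train_def)
      then have "indicator {p..<p + 1::real} \<theta> \<le> (\<Sum>p\<in>pulse_starts l. indicator {p..<p + 1::real} \<theta> :: real)"
        by (intro member_le_sum) auto
      then show ?thesis using \<open>\<theta> \<in> {p..<p + 1}\<close> by (auto simp: indicator_def)
    qed (simp add: sum_nonneg)
  qed
  also have "\<dots> = 2 ^ l"
    by (simp add: Bochner_Integration.integral_sum)
  finally show ?thesis .
qed

text \<open>Sample times of the cut cost on each edge, relative to \<open>\<theta> \<in> [0,1)\<close>: the pulse starts at
  which the tail of the edge lies on the source side of \<^const>\<open>doubling_cut\<close>, and for the sink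
  edge also the gaps just before them.\<close>
definition doubling_samples :: "nat \<Rightarrow> nat \<times> nat \<Rightarrow> 'a::linordered_idom set" where
  "doubling_samples l e =
     (if fst e = 0 then {0}
      else if fst e = node_x l then pulse_starts l \<union> (\<lambda>p. p - 1) ` pulse_starts l
      else if odd (fst e) then pulse_starts (fst e div 2)
      else (\<lambda>p. p + 2 ^ (fst e div 2)) ` pulse_starts (fst e div 2 - 1))"

lemma doubling_samples_simps [simp]:
  "doubling_samples l (0, v) = {0}"
  "doubling_samples l (node_x l, v) = pulse_starts l \<union> (\<lambda>p. p - 1) ` pulse_starts l"
  "i < l \<Longrightarrow> doubling_samples l (node_x i, v) = pulse_starts i"
  "doubling_samples l (node_y i, v) = (\<lambda>p. p + 2 ^ Suc i) ` pulse_starts i"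
  unfolding doubling_samples_def by auto

lemma finite_doubling_samples [simp]: "finite (doubling_samples l e)"
  by (simp add: doubling_samples_def)

lemma doubling_samples_separated:
  assumes "e \<in> doubling_edges l" "p \<in> doubling_samples l e" "p' \<in> doubling_samples l e" "p \<noteq> p'"
  shows "1 \<le> \<bar>p - p'\<bar>"
proof -
  have "p \<in> \<int>" "p' \<in> \<int>"
    using assms(1-3) by (cases rule: doubling_edges_cases; force intro: pulse_starts_Ints)+
  then show ?thesis
    using assms(4) by (intro Ints_nonzero_abs_ge1) auto
qed

lemma doubling_samples_window:
  assumes "e \<in> doubling_edges l" "p \<in> doubling_samples l e"
  shows "-1 \<le> p" "p + 1 \<le> 2 ^ Suc l - doubling_transit l e"
proof -
  have double: "(2::'a) ^ Suc i + 2 ^ Suc i \<le> 2 ^ Suc l" if "i < l" for i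
    using that power_increasing[of "Suc (Suc i)" "Suc l" "2::'a"] by simp
  have "-1 \<le> p \<and> p + 1 \<le> 2 ^ Suc l - doubling_transit l e"
    using assms(1)
  proof (cases rule: doubling_edges_cases)
    case 1
    have "(1::'a) \<le> 2 ^ Suc l" by (rule one_le_power) simp
    with 1 assms(2) show ?thesis by simp
  next
    case 2
    with assms(2) consider "p \<in> pulse_starts l" | p' where "p' \<in> pulse_starts l" "p = p' - 1"
      by auto
    then show ?thesis
      using 2 pulse_starts_bounds[of _ l] by cases (fastforce simp del: power_Suc)+
  next
    case (3 i)
    with assms(2) double[of i] show ?thesis
      using pulse_starts_bounds[of p i] zero_le_power[of "2::'a" "Suc i"] by (simp del: power_Suc)
  next
    case (4 i)
    with assms(2) double[of i] show ?thesis
      using pulse_starts_bounds[of p i] by (simp del: power_Suc)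
  next
    case (5 i)
    with assms(2) obtain p' where "p' \<in> pulse_starts i" "p = p' + 2 ^ Suc i"
      by auto
    then show ?thesis
      using 5 double[of i] pulse_starts_bounds[of p' i] by (simp del: power_Suc)
  qed
  then show "-1 \<le> p" "p + 1 \<le> 2 ^ Suc l - doubling_transit l e" by simp_all
qed

lemma doubling_sampled_cut_cost_split:
  fixes S :: "nat \<Rightarrow> 'a::linordered_idom \<Rightarrow> bool"
  assumes sink: "\<And>p. p \<in> doubling_samples l (node_x l, node_y l) \<Longrightarrow> \<not> S (node_y l) (\<theta> + p)"
  shows "sampled_cut_cost (doubling_edges l) (doubling_transit l) (doubling_capacity l) S (doubling_samples l) \<theta>
    = (\<Sum>e\<in>doubling_edges l - {(node_x l, node_y l)}. \<Sum>p\<in>doubling_samples l e.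
         cut_edge_cost (doubling_transit l) (doubling_capacity l) S e (\<theta> + p))
      + (\<Sum>p\<in>pulse_starts l. if S (node_x l) (\<theta> + p) then 1 else 0)
      + (\<Sum>p\<in>pulse_starts l. if S (node_x l) (\<theta> + p - 1) then 1 else 0)"
proof -
  have disjoint: "pulse_starts l \<inter> (\<lambda>p. p - 1) ` pulse_starts l = ({} :: 'a set)"
    using pulse_train_at_start[of 0 _ l] pulse_train_gap[of 0 _ l l] by force
  have "(\<Sum>p\<in>doubling_samples l (node_x l, node_y l).
        cut_edge_cost (doubling_transit l) (doubling_capacity l) S (node_x l, node_y l) (\<theta> + p))
      = (\<Sum>p\<in>pulse_starts l \<union> (\<lambda>p. p - 1) ` pulse_starts l. if S (node_x l) (\<theta> + p) then 1 else 0)"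
    using sink by (intro sum.cong) (auto simp: cut_edge_cost_def)
  also have "\<dots> = (\<Sum>p\<in>pulse_starts l. if S (node_x l) (\<theta> + p) then 1 else 0)
      + (\<Sum>p\<in>pulse_starts l. if S (node_x l) (\<theta> + p - 1) then 1 else 0)"
    using disjoint by (simp add: sum.union_disjoint sum.reindex inj_on_def algebra_simps)
  finally show ?thesis
    unfolding sampled_cut_cost_def
    by (subst sum.remove[of _ "(node_x l, node_y l)"]) (simp_all add: add.commute add.left_commute)
qed

lemma doubling_capacity_off_sink:
  "e \<in> doubling_edges l \<Longrightarrow> e \<noteq> (node_x l, node_y l) \<Longrightarrow> doubling_capacity l e \<theta> \<noteq> 0 \<Longrightarrow>
    doubling_capacity l e \<theta> = 2 ^ Suc l"
  by (auto simp: doubling_capacity_def)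

text \<open>Uncut edges carry membership in the source side from \<open>x\<^sub>i\<close> at a pulse start to \<open>x\<^sub>i\<^sub>+\<^sub>1\<close> at the
  same time and, through \<open>y\<^sub>i\<close>, at the time delayed by \<open>2\<^sup>i\<^sup>+\<^sup>1\<close>.\<close>
lemma doubling_uncut_tree_closure:
  fixes S :: "nat \<Rightarrow> 'a::linordered_idom \<Rightarrow> bool"
  assumes "0 \<le> \<theta>" "\<theta> < 1" "S 0 \<theta>"
    and uncut: "\<And>e p. e \<in> doubling_edges l - {(node_x l, node_y l)} \<Longrightarrow> p \<in> doubling_samples l e \<Longrightarrow>
      cut_edge_cost (doubling_transit l) (doubling_capacity l) S e (\<theta> + p) = 0"
    and "p \<in> pulse_starts l"
  shows "S (node_x l) (\<theta> + p)"
proof -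
  have follow: "S (snd e) (\<theta> + p + doubling_transit l e)"
    if "e \<in> doubling_edges l - {(node_x l, node_y l)}" "p \<in> doubling_samples l e"
      "doubling_capacity l e (\<theta> + p) \<noteq> 0" "S (fst e) (\<theta> + p)" for e p
    using uncut[OF that(1,2)] that(3,4) by (auto simp: cut_edge_cost_def split: if_splits)
  have base: "S (node_x 0) (\<theta> + 0)"
    using follow[of "(0, node_x 0)" 0] assms(1-3) by simp
  have step: "S (node_x (Suc i)) (\<theta> + p) \<and> S (node_x (Suc i)) (\<theta> + (p + 2 ^ Suc i))"
    if "i < l" "p \<in> pulse_starts i" "S (node_x i) (\<theta> + p)" for i p
  proof -
    have "S (node_y i) (\<theta> + p + 2 ^ Suc i)"
      using follow[of "(node_x i, node_y i)" p] that by simp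
    then show ?thesis
      using follow[of "(node_x i, node_x (Suc i))" p] follow[of "(node_y i, node_x (Suc i))" "p + 2 ^ Suc i"] that
      by (simp add: add.assoc)
  qed
  show ?thesis
    by (rule pulse_starts_induct[where P = "\<lambda>i p. S (node_x i) (\<theta> + p)", OF order.refl assms(5) base step])
qed

lemma doubling_tree_cut_cost_dichotomy:
  fixes S :: "nat \<Rightarrow> 'a::linordered_idom \<Rightarrow> bool"
  assumes "0 \<le> \<theta>" "\<theta> < 1" "S 0 \<theta>"
  shows "2 ^ Suc l \<le> (\<Sum>e\<in>doubling_edges l - {(node_x l, node_y l)}. \<Sum>p\<in>doubling_samples l e.
      cut_edge_cost (doubling_transit l) (doubling_capacity l) S e (\<theta> + p))
    \<or> (\<forall>p\<in>pulse_starts l. S (node_x l) (\<theta> + p))"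
proof -
  define cost where "cost e p = cut_edge_cost (doubling_transit l) (doubling_capacity l) S e (\<theta> + p)" for e p
  have cost_nonneg: "0 \<le> cost e p" for e p
    unfolding cost_def by (rule cut_edge_cost_nonneg) (rule doubling_capacity_nonneg)
  show ?thesis
  proof (cases "\<forall>e\<in>doubling_edges l - {(node_x l, node_y l)}. \<forall>p\<in>doubling_samples l e. cost e p = 0")
    case True
    then show ?thesis
      using doubling_uncut_tree_closure[where S = S and l = l and \<theta> = \<theta>, OF assms]
      unfolding cost_def by blast
  next
    case False
    then obtain e p where e: "e \<in> doubling_edges l - {(node_x l, node_y l)}" "p \<in> doubling_samples l e"
      and "cost e p \<noteq> 0" by blast
    then have "2 ^ Suc l = cost e p"
      using doubling_capacity_off_sink[of e l "\<theta> + p"] by (auto simp: cost_def cut_edge_cost_def split: if_splits)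
    also have "\<dots> \<le> (\<Sum>p\<in>doubling_samples l e. cost e p)"
      using e cost_nonneg by (intro member_le_sum) auto
    also have "\<dots> \<le> (\<Sum>e\<in>doubling_edges l - {(node_x l, node_y l)}. \<Sum>p\<in>doubling_samples l e. cost e p)"
      using e cost_nonneg by (intro member_le_sum sum_nonneg) auto
    finally show ?thesis
      unfolding cost_def by blast
  qed
qed

lemma doubling_sampled_cut_cost_bounds:
  fixes S :: "nat \<Rightarrow> 'a::linordered_idom \<Rightarrow> bool"
  assumes \<theta>: "0 \<le> \<theta>" "\<theta> < 1" and source: "S 0 \<theta>"
    and sink: "\<And>p. p \<in> doubling_samples l (node_x l, node_y l) \<Longrightarrow> \<not> S (node_y l) (\<theta> + p)"
  defines "J \<equiv> sampled_cut_cost (doubling_edges l) (doubling_transit l) (doubling_capacity l) S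
    (doubling_samples l) \<theta>"
  shows doubling_sampled_cut_cost_ge: "2 ^ l \<le> J"
    and doubling_sampled_cut_cost_le_imp:
      "J \<le> 2 ^ l \<Longrightarrow> p \<in> pulse_starts l \<Longrightarrow> S (node_x l) (\<theta> + p) \<and> \<not> S (node_x l) (\<theta> + p - 1)"
proof -
  define tree where "tree = (\<Sum>e\<in>doubling_edges l - {(node_x l, node_y l)}. \<Sum>p\<in>doubling_samples l e.
      cut_edge_cost (doubling_transit l) (doubling_capacity l) S e (\<theta> + p))"
  define hits where "hits q = (\<Sum>p\<in>pulse_starts l. if S (node_x l) (\<theta> + p + q) then 1 else (0::real))" for q
  have J: "J = tree + hits 0 + hits (- 1)"
    using doubling_sampled_cut_cost_split[where S = S and l = l and \<theta> = \<theta>, OF sink]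
    unfolding J_def tree_def hits_def by simp
  have "0 \<le> tree"
    unfolding tree_def by (intro sum_nonneg cut_edge_cost_nonneg doubling_capacity_nonneg)
  have hits_nonneg: "0 \<le> hits q" for q
    unfolding hits_def by (intro sum_nonneg) simp
  note dichotomy = doubling_tree_cut_cost_dichotomy[where S = S and l = l and \<theta> = \<theta>, OF \<theta> source,
      folded tree_def]
  have hits_full: "hits 0 = 2 ^ l" if "\<forall>p\<in>pulse_starts l. S (node_x l) (\<theta> + p)"
    using that by (simp add: hits_def)
  have less: "(2::real) ^ l < 2 ^ Suc l" by simp
  from dichotomy show "2 ^ l \<le> J"
  proof
    assume "2 ^ Suc l \<le> tree"
    then show ?thesis using J hits_nonneg[of 0] hits_nonneg[of "- 1"] less by linarith
  next
    assume "\<forall>p\<in>pulse_starts l. S (node_x l) (\<theta> + p)"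
    then show ?thesis using J hits_full \<open>0 \<le> tree\<close> hits_nonneg[of "- 1"] by linarith
  qed
  assume "J \<le> 2 ^ l" and p: "p \<in> pulse_starts l"
  have all: "\<forall>p\<in>pulse_starts l. S (node_x l) (\<theta> + p)"
    using dichotomy
  proof
    assume "2 ^ Suc l \<le> tree"
    then have False
      using J \<open>J \<le> 2 ^ l\<close> hits_nonneg[of 0] hits_nonneg[of "- 1"] less by linarith
    then show ?thesis ..
  qed
  then have "hits (- 1) = 0"
    using hits_full \<open>J \<le> 2 ^ l\<close> \<open>0 \<le> tree\<close> hits_nonneg[of "- 1"] J by linarith
  then have "\<not> S (node_x l) (\<theta> + p - 1)"
    using p by (auto simp: hits_def sum_nonneg_eq_0_iff split: if_splits)
  then show "S (node_x l) (\<theta> + p) \<and> \<not> S (node_x l) (\<theta> + p - 1)"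
    using all p by blast
qed

lemma doubling_min_cut_d_pattern:
  assumes min_cut: "is_min_cut_d (doubling_edges l) 0 (node_y l) (doubling_transit l) (doubling_capacity l) k1 k2 S"
    and k: "k1 \<le> -1" "2 ^ Suc l \<le> k2" and p: "p \<in> pulse_starts l"
  shows "S (node_x l) p \<and> \<not> S (node_x l) (p - 1)"
proof -
  have cut: "S 0 \<theta> \<and> \<not> S (node_y l) \<theta>" if "k1 \<le> \<theta>" "\<theta> \<le> k2" for \<theta>
    using min_cut that unfolding is_min_cut_d_def is_cut_d_def by auto
  have window: "-1 \<le> q" "q \<le> k2 - doubling_transit l e" if "e \<in> doubling_edges l" "q \<in> doubling_samples l e" for e q
    using doubling_samples_window[OF that] k(2) by linarith+
  have "0 \<le> k2"
    using k(2) zero_le_power[of "2::int" "Suc l"] by linarith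
  then have source: "S 0 0"
    using cut k(1) by simp
  have sink: "\<not> S (node_y l) (0 + q)" if "q \<in> doubling_samples l (node_x l, node_y l)" for q
    using window[OF _ that] cut k by simp
  have "sampled_cut_cost (doubling_edges l) (doubling_transit l) (doubling_capacity l) S (doubling_samples l) 0
      \<le> cut_capacity_d (doubling_edges l) (doubling_transit l) (doubling_capacity l) k1 k2 S"
  proof (rule sampled_cut_cost_le_cut_capacity_d[OF subsetI doubling_capacity_nonneg])
    fix e and q :: int
    assume "e \<in> doubling_edges l" "q \<in> doubling_samples l e"
    then show "q \<in> {k1..k2 - doubling_transit l e}"
      using window k(1) by fastforce
  qed
  also have "\<dots> \<le> cut_capacity_d (doubling_edges l) (doubling_transit l) (doubling_capacity l) k1 k2 (doubling_cut l)"
    using min_cut doubling_cut_is_cut_d unfolding is_min_cut_d_def by blast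
  also have "\<dots> \<le> 2 ^ l"
    by (rule doubling_cut_capacity_d_le)
  finally show ?thesis
    using doubling_sampled_cut_cost_le_imp[of 0 S l, OF _ _ source sink _ p] by simp
qed

lemma doubling_capacity_measurable [measurable]:
  "(doubling_capacity l e :: real \<Rightarrow> real) \<in> borel_measurable borel"
  unfolding doubling_capacity_def by measurable

lemma doubling_sampled_cut_cost_integral_le:
  fixes S :: "nat \<Rightarrow> real \<Rightarrow> bool"
  assumes "is_cut (doubling_vertices l) 0 (node_y l) k1 k2 S" "k1 \<le> -1" "2 ^ Suc l \<le> k2"
  defines "J \<equiv> sampled_cut_cost (doubling_edges l) (doubling_transit l) (doubling_capacity l) S
    (doubling_samples l)"
  shows "set_integrable lborel {0..<1} J"
    and "(LINT \<theta>:{0..<1}|lborel. J \<theta>)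
      \<le> cut_capacity (doubling_edges l) (doubling_transit l) (doubling_capacity l) k1 k2 S"
proof -
  have window: "k1 \<le> q \<and> q + 1 \<le> k2 - doubling_transit l e"
    if "e \<in> doubling_edges l" "q \<in> doubling_samples l e" for e q
    using doubling_samples_window[OF that] assms(2,3) by simp
  have measurable: "{\<theta>. S v \<theta>} \<in> sets borel" if "v \<in> doubling_vertices l" for v
    using assms(1) that unfolding is_cut_def by blast
  have capacity: "0 \<le> doubling_capacity l e \<theta> \<and> doubling_capacity l e \<theta> \<le> 2 ^ Suc l" for e and \<theta> :: real
    using doubling_capacity_nonneg doubling_capacity_le by blast
  note sampled = sampled_cut_cost_le_cut_capacity[OF doubling_edges_subset measurable doubling_capacity_measurable
      capacity finite_doubling_samples doubling_samples_separated window]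
  then show "set_integrable lborel {0..<1} J"
    and "(LINT \<theta>:{0..<1}|lborel. J \<theta>)
      \<le> cut_capacity (doubling_edges l) (doubling_transit l) (doubling_capacity l) k1 k2 S"
    by (simp_all add: J_def)
qed

lemma doubling_min_cut_pattern:
  assumes min_cut: "is_min_cut (doubling_vertices l) (doubling_edges l) 0 (node_y l) (doubling_transit l)
      (doubling_capacity l) k1 k2 S"
    and k: "k1 \<le> -1" "2 ^ Suc l \<le> k2"
  shows "AE \<theta> in lborel. \<theta> \<in> {0..<1} \<longrightarrow>
    (\<forall>p\<in>pulse_starts l. S (node_x l) (\<theta> + p) \<and> \<not> S (node_x l) (\<theta> + p - 1))"
proof -
  define J where
    "J = sampled_cut_cost (doubling_edges l) (doubling_transit l) (doubling_capacity l) S (doubling_samples l)"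
  have is_cut: "is_cut (doubling_vertices l) 0 (node_y l) k1 k2 S"
    using min_cut unfolding is_min_cut_def by blast
  have "(1::real) \<le> 2 ^ Suc l"
    by (rule one_le_power) simp
  then have source: "S 0 \<theta>" if "\<theta> \<in> {0..<1}" for \<theta>
    using is_cut that k unfolding is_cut_def by auto
  have sink: "\<not> S (node_y l) (\<theta> + q)"
    if "\<theta> \<in> {0..<1}" "q \<in> doubling_samples l (node_x l, node_y l)" for \<theta> q
    using is_cut doubling_samples_window[OF _ that(2)] that(1) k unfolding is_cut_def by auto
  note sampled = doubling_sampled_cut_cost_integral_le[OF is_cut k, folded J_def]
  have "(LINT \<theta>:{0..<1}|lborel. J \<theta>)
      \<le> cut_capacity (doubling_edges l) (doubling_transit l) (doubling_capacity l) k1 k2 S"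
    by (rule sampled(2))
  also have "\<dots> \<le> cut_capacity (doubling_edges l) (doubling_transit l) (doubling_capacity l) k1 k2 (doubling_cut l)"
    using min_cut doubling_cut_is_cut unfolding is_min_cut_def by blast
  also have "\<dots> \<le> 2 ^ l"
    by (rule doubling_cut_capacity_le)
  finally have "AE \<theta> in lborel. \<theta> \<in> {0..<1} \<longrightarrow> J \<theta> = 2 ^ l"
    using sampled(1) doubling_sampled_cut_cost_ge[of _ S l, OF _ _ source sink]
    by (intro AE_eq_if_set_integral_le_lower_bound) (auto simp: J_def)
  then show ?thesis
  proof (rule AE_mp, intro AE_I2 impI ballI)
    fix \<theta> p :: real
    assume "\<theta> \<in> {0..<1} \<longrightarrow> J \<theta> = 2 ^ l" "\<theta> \<in> {0..<1}" "p \<in> pulse_starts l"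
    then show "S (node_x l) (\<theta> + p) \<and> \<not> S (node_x l) (\<theta> + p - 1)"
      using doubling_sampled_cut_cost_le_imp[of \<theta> S l p] source sink unfolding J_def by auto
  qed
qed

lemma node_x_mem_doubling_vertices: "node_x l \<in> doubling_vertices l"
  by (simp add: doubling_vertices_def node_x_def node_y_def)

lemma doubling_min_cut_inf_d_complexity:
  assumes "is_min_cut_inf_d (doubling_vertices l) (doubling_edges l) 0 (node_y l) (doubling_transit l)
      (doubling_capacity l) S"
  shows "2 ^ l \<le> cut_complexity_d (doubling_vertices l) S"
proof -
  obtain k1 k2 S' where k: "k1 \<le> -1" "2 ^ Suc l \<le> k2"
    and S': "is_min_cut_d (doubling_edges l) 0 (node_y l) (doubling_transit l) (doubling_capacity l) k1 k2 S'"
    and agree: "\<forall>v\<in>doubling_vertices l. \<forall>\<theta>\<in>{-1..2 ^ Suc l}. S' v \<theta> = S v \<theta>"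
    using min_cut_inf_d_restrict[OF assms] by blast
  have "S (node_x l) (p - 1) \<noteq> S (node_x l) p" if "p \<in> pulse_starts l" for p
  proof -
    have "p - 1 \<in> {-1..2 ^ Suc l}" "p \<in> {-1..2 ^ Suc l}"
      using pulse_starts_bounds[OF that] by auto
    then show ?thesis
      using doubling_min_cut_d_pattern[OF S' k that] agree node_x_mem_doubling_vertices by auto
  qed
  then have "2 ^ l \<le> nchanges_d (S (node_x l))"
    using card_le_nchanges_d[of "pulse_starts l" "S (node_x l)"] by (simp add: enat_two_power)
  also have "\<dots> \<le> cut_complexity_d (doubling_vertices l) S"
    unfolding cut_complexity_d_def using node_x_mem_doubling_vertices
    by (intro member_le_sum) (simp_all add: doubling_vertices_def)
  finally show ?thesis .
qed

lemma doubling_min_cut_inf_complexity: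
  assumes "is_min_cut_inf (doubling_vertices l) (doubling_edges l) 0 (node_y l) (doubling_transit l)
      (doubling_capacity l) S"
  shows "2 ^ l \<le> cut_complexity (doubling_vertices l) S"
proof -
  obtain k1 k2 S' where k: "k1 \<le> -1" "2 ^ Suc l \<le> k2"
    and S': "is_min_cut (doubling_vertices l) (doubling_edges l) 0 (node_y l) (doubling_transit l)
      (doubling_capacity l) k1 k2 S'"
    and agree: "\<forall>v\<in>doubling_vertices l. \<forall>\<theta>\<in>{-1..2 ^ Suc l}. S' v \<theta> = S v \<theta>"
    using min_cut_inf_restrict[OF assms] by blast
  have "pulse_starts l \<subseteq> changes (S (node_x l))"
  proof
    fix p :: real assume p: "p \<in> pulse_starts l"
    show "p \<in> changes (S (node_x l))"
    proof (rule jump_in_changes)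
      show "AE \<theta> in lborel. \<theta> \<in> {0..<1} \<longrightarrow> S (node_x l) (p + \<theta>) = True \<and> S (node_x l) (p + \<theta> - 1) = False"
        using doubling_min_cut_pattern[OF S' k]
      proof (rule AE_mp, intro AE_I2 impI)
        fix \<theta> :: real
        assume "\<theta> \<in> {0..<1} \<longrightarrow> (\<forall>p\<in>pulse_starts l. S' (node_x l) (\<theta> + p) \<and> \<not> S' (node_x l) (\<theta> + p - 1))"
          "\<theta> \<in> {0..<1}"
        moreover have "p + \<theta> \<in> {-1..2 ^ Suc l}" "p + \<theta> - 1 \<in> {-1..2 ^ Suc l}"
          using pulse_starts_bounds[OF p] \<open>\<theta> \<in> {0..<1}\<close> by auto
        ultimately show "S (node_x l) (p + \<theta>) = True \<and> S (node_x l) (p + \<theta> - 1) = False"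
          using agree node_x_mem_doubling_vertices p by (auto simp: add.commute)
      qed
    qed simp
  qed
  then have "2 ^ l \<le> nchanges (S (node_x l))"
    using card_le_nchanges[of "pulse_starts l" "S (node_x l)"] by (simp add: enat_two_power)
  also have "\<dots> \<le> cut_complexity (doubling_vertices l) S"
    unfolding cut_complexity_def using node_x_mem_doubling_vertices
    by (intro member_le_sum) (simp_all add: doubling_vertices_def)
  finally show ?thesis .
qed

section \<open>Capacity changes and size of the network\<close>

lemma changes_const: "changes (\<lambda>\<theta>::real. c) = {}"
  unfolding changes_def by (auto intro: exI[of _ 1])

lemma changes_unit_pulse:
  fixes M :: real
  assumes "M \<noteq> 0"
  shows "changes (\<lambda>\<theta>::real. if 0 \<le> \<theta> \<and> \<theta> < 1 then M else 0) = {0, 1}"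
    (is "changes ?g = _")
proof (intro equalityI subsetI)
  fix x assume x: "x \<in> changes ?g"
  show "x \<in> {0, 1}"
  proof (rule ccontr)
    assume "x \<notin> {0, 1}"
    then have "0 < min \<bar>x\<bar> \<bar>x - 1\<bar>" by auto
    moreover have "?g y = ?g x" if "\<bar>y - x\<bar> < min \<bar>x\<bar> \<bar>x - 1\<bar>" for y
      using that by (auto split: abs_split)
    ultimately show False
      using x unfolding changes_def by blast
  qed
next
  fix x :: real assume "x \<in> {0, 1}"
  moreover have "0 \<in> changes ?g"
    by (rule jump_in_changes[where A = M and B = 0]) (auto intro!: AE_I2 simp: assms)
  moreover have "1 \<in> changes ?g"
    by (rule jump_in_changes[where A = 0 and B = M]) (auto intro!: AE_I2 simp: assms)
  ultimately show "x \<in> changes ?g" by blast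
qed

lemma changes_doubling_capacity:
  "changes (doubling_capacity l e :: real \<Rightarrow> real) = (if e = (0, node_x 0) then {0, 1} else {})"
proof (cases "e = (0, node_x 0)")
  case True
  then have "doubling_capacity l e = (\<lambda>\<theta>::real. if 0 \<le> \<theta> \<and> \<theta> < 1 then 2 ^ Suc l else 0)"
    by auto
  then show ?thesis using True changes_unit_pulse[of "2 ^ Suc l"] by simp
next
  case False
  then have "doubling_capacity l e = (\<lambda>\<theta>::real. if e = (node_x l, node_y l) then 1 else 2 ^ Suc l)"
    by (auto simp: doubling_capacity_def)
  then show ?thesis using False by (simp add: changes_const)
qed

lemma changes_d_doubling_capacity:
  "changes_d (doubling_capacity l e :: int \<Rightarrow> real) = (if e = (0, node_x 0) then {-1, 0} else {})"
  by (auto simp: changes_d_def doubling_capacity_def)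

lemma num_cap_changes_doubling: "num_cap_changes (doubling_edges l) (doubling_capacity l) = 2"
  unfolding num_cap_changes_def nchanges_def changes_doubling_capacity
  by (subst sum_eq_single_nonzero[where x = "(0, node_x 0)"]) (auto simp: zero_enat_def numeral_eq_enat)

lemma num_cap_changes_d_doubling: "num_cap_changes_d (doubling_edges l) (doubling_capacity l) = 2"
  unfolding num_cap_changes_d_def nchanges_d_def changes_d_doubling_capacity
  by (subst sum_eq_single_nonzero[where x = "(0, node_x 0)"]) (auto simp: zero_enat_def numeral_eq_enat)

lemma doubling_network:
  "dyn_network (doubling_vertices l) (doubling_edges l) 0 (node_y l) (doubling_transit l) (doubling_capacity l)"
  using doubling_edges_subset doubling_transit_nonneg doubling_capacity_nonneg
  by (auto simp: dyn_network_def doubling_vertices_def changes_doubling_capacity)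

lemma doubling_network_d:
  "dyn_network_d (doubling_vertices l) (doubling_edges l) 0 (node_y l) (doubling_transit l) (doubling_capacity l)"
  using doubling_edges_subset doubling_transit_nonneg doubling_capacity_nonneg
  by (auto simp: dyn_network_d_def doubling_vertices_def changes_d_doubling_capacity)

lemma acyclic_doubling_edges: "acyclic_graph (doubling_edges l)"
proof -
  have "a < b" if "(a, b) \<in> (doubling_edges l)\<^sup>+" for a b
    using that by (induction rule: trancl_induct) (auto dest: doubling_edges_forward)
  then show ?thesis by (auto simp: acyclic_graph_def)
qed

lemma card_doubling_vertices: "card (doubling_vertices l) = 2 * l + 3"
  by (simp add: doubling_vertices_def node_y_def)

lemma card_doubling_edges: "card (doubling_edges l) \<le> 3 * l + 2"
proof -
  have "card (doubling_edges l) \<le> card {(0, node_x 0), (node_x l, node_y l)}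
      + card (\<Union>i<l. {(node_x i, node_x (Suc i)), (node_x i, node_y i), (node_y i, node_x (Suc i))})"
    unfolding doubling_edges_def by (rule card_Un_le)
  also have "\<dots> \<le> 2 + (\<Sum>i<l. card {(node_x i, node_x (Suc i)), (node_x i, node_y i), (node_y i, node_x (Suc i))})"
    by (intro add_mono card_UN_le) (auto simp: card_insert_if)
  also have "\<dots> \<le> 2 + (\<Sum>i<l. 3)"
    by (intro add_left_mono sum_mono) (auto simp: card_insert_if)
  finally show ?thesis by simp
qed

lemma doubling_transit_le: "doubling_transit l e \<le> (2::'a::linordered_idom) ^ l"
  unfolding doubling_transit_def by (auto simp del: power_Suc intro!: power_increasing)

lemma doubling_size:
  assumes "1 \<le> l"
  shows "dyn_size_le (doubling_vertices l) (doubling_edges l) (doubling_transit l) (doubling_capacity l)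
    (5 * l ^ 1)"
  unfolding dyn_size_le_def
proof (intro conjI ballI allI)
  have large: "(2::real) ^ Suc l \<le> 2 ^ (5 * l ^ 1)"
    using assms by (intro power_increasing) simp_all
  show "card (doubling_vertices l) \<le> 5 * l ^ 1" "card (doubling_edges l) \<le> 5 * l ^ 1"
    using assms card_doubling_vertices[of l] card_doubling_edges[of l] by simp_all
  fix e assume "e \<in> doubling_edges l"
  show "doubling_transit l e \<in> (\<int> :: real set)"
    by (simp add: doubling_transit_def)
  have "doubling_transit l e \<le> (2::real) ^ Suc l"
    by (rule order_trans[OF doubling_transit_le power_increasing]) simp_all
  then show "\<bar>doubling_transit l e :: real\<bar> \<le> 2 ^ (5 * l ^ 1)"
    using large doubling_transit_nonneg[of l e, where 'a=real] by simp
  fix \<theta> :: real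
  show "doubling_capacity l e \<theta> \<in> \<int>"
    by (simp add: doubling_capacity_def)
  show "\<bar>doubling_capacity l e \<theta>\<bar> \<le> 2 ^ (5 * l ^ 1)"
    using large doubling_capacity_le[of l e \<theta>] doubling_capacity_nonneg[of l e \<theta>] by simp
next
  fix e and \<theta> :: real
  assume "e \<in> doubling_edges l" "\<theta> \<in> changes (doubling_capacity l e)"
  moreover have "(1::real) \<le> 2 ^ (5 * l ^ 1)"
    by (rule one_le_power) simp
  ultimately show "\<theta> \<in> \<int>" "\<bar>\<theta>\<bar> \<le> 2 ^ (5 * l ^ 1)"
    by (auto simp: changes_doubling_capacity split: if_splits)
qed

lemma doubling_size_d:
  assumes "1 \<le> l"
  shows "dyn_size_le_d (doubling_vertices l) (doubling_edges l) (doubling_transit l) (doubling_capacity l)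
    (5 * l ^ 1)"
  unfolding dyn_size_le_d_def
proof (intro conjI ballI allI)
  show "card (doubling_vertices l) \<le> 5 * l ^ 1" "card (doubling_edges l) \<le> 5 * l ^ 1"
    using assms card_doubling_vertices[of l] card_doubling_edges[of l] by simp_all
  fix e assume "e \<in> doubling_edges l"
  have "doubling_transit l e \<le> (2::int) ^ (5 * l ^ 1)"
    by (rule order_trans[OF doubling_transit_le power_increasing]) simp_all
  then show "\<bar>doubling_transit l e :: int\<bar> \<le> 2 ^ (5 * l ^ 1)"
    using doubling_transit_nonneg[of l e, where 'a=int] by simp
  fix \<theta> :: int
  show "doubling_capacity l e \<theta> \<in> \<int>"
    by (simp add: doubling_capacity_def)
  have "(2::real) ^ Suc l \<le> 2 ^ (5 * l ^ 1)"
    using assms by (intro power_increasing) simp_all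
  then show "\<bar>doubling_capacity l e \<theta>\<bar> \<le> 2 ^ (5 * l ^ 1)"
    using doubling_capacity_le[of l e \<theta>] doubling_capacity_nonneg[of l e \<theta>] by simp
next
  fix e and \<theta> :: int
  assume "e \<in> doubling_edges l" "\<theta> \<in> changes_d (doubling_capacity l e)"
  moreover have "(1::int) \<le> 2 ^ (5 * l ^ 1)"
    by (rule one_le_power) simp
  ultimately show "\<bar>\<theta>\<bar> \<le> 2 ^ (5 * l ^ 1)"
    by (auto simp: changes_d_doubling_capacity split: if_splits)
qed

theorem corollary3:
  shows
  "(\<exists>c k :: nat. \<forall>l::nat. l \<ge> 1 \<longrightarrow>
     (\<exists>V E s t \<tau> u.
        dyn_network V E s t \<tau> u \<and> acyclic_graph E \<and>
        dyn_size_le V E \<tau> u (c * l ^ k) \<and>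
        num_cap_changes E u = 2 \<and>
        (\<forall>S. is_min_cut_inf V E s t \<tau> u S \<longrightarrow> cut_complexity V S \<ge> 2 ^ l) \<and>
        (\<forall>f. is_max_flow_inf V E s t \<tau> u f \<longrightarrow> flow_complexity E f \<ge> 2 ^ l))) \<and>
   (\<exists>c k :: nat. \<forall>l::nat. l \<ge> 1 \<longrightarrow>
     (\<exists>V E s t \<tau> u.
        dyn_network_d V E s t \<tau> u \<and> acyclic_graph E \<and>
        dyn_size_le_d V E \<tau> u (c * l ^ k) \<and>
        num_cap_changes_d E u = 2 \<and>
        (\<forall>S. is_min_cut_inf_d V E s t \<tau> u S \<longrightarrow> cut_complexity_d V S \<ge> 2 ^ l) \<and>
        (\<forall>f. is_max_flow_inf_d V E s t \<tau> u f \<longrightarrow> flow_complexity_d E f \<ge> 2 ^ l)))"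
  by (intro conjI; rule exI[of _ 5], rule exI[of _ 1], intro allI impI)
    (blast intro: doubling_network doubling_network_d acyclic_doubling_edges doubling_size doubling_size_d
      num_cap_changes_doubling num_cap_changes_d_doubling doubling_min_cut_inf_complexity
      doubling_min_cut_inf_d_complexity doubling_max_flow_inf_complexity doubling_max_flow_inf_d_complexity)+

end
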